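(* For $p,q\in\mathbb{N}$ with $1\le q<p$, let $U_q$ be the stabiliser of $1$ in $S_q$. Then the number of orbits of the power group $S_{[p]\setminus[q]}^{\times 2}\times U_q$ on the set of all functions $([p]\setminus[q])\times([p]\setminus[q])\to[q]$ equals \[ N(p,q)=\sum_{j\vdash q-1}\ \sum_{k\vdash p-q}\left(\prod_{i=1}^{q-1} j_i!\,i^{j_i}\prod_{i=1}^{p-q}k_i!\,i^{k_i}\right)^{-1}\prod_{a,b=1}^{p-q}\Bigl(1+\sum_{d\mid \operatorname{lcm}(a,b)} d\,j_d\Bigr)^{k_ak_b\gcd(a,b)}. \]
   Context: $[p]=\{1,\ldots,p\}$. Power group: if groups $A,B$ act on finite sets $X,Y$, then $A\times B$ acts on functions $f:X\to Y$ by $f^{(\alpha,\beta)}(x)=(f(x^\alpha))^\beta$. $S_X^{\times 2}$ (for $X=[p]\setminus[q]$) is the symmetric group $S_X$ acting on $X\times X$ by $(x_1,x_2)^\alpha=(x_1^\alpha,x_2^\alpha)$; $U_q$ acts naturally on $[q]$. $j\vdash n$ denotes a partition of $n$ (empty if $n=0$) and $j_i$ the number of parts equal to $i$. *)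

theory Defs
  imports Complex_Main "HOL-Library.FuncSet" "HOL-Combinatorics.Permutations"
begin

definition Xset :: "nat \<Rightarrow> nat \<Rightarrow> nat set" where
  "Xset p q = {1..p} - {1..q}"

definition funs :: "nat \<Rightarrow> nat \<Rightarrow> (nat \<times> nat \<Rightarrow> nat) set" where
  "funs p q = (Xset p q \<times> Xset p q) \<rightarrow>\<^sub>E {1..q}"

definition pg_act :: "nat \<Rightarrow> nat \<Rightarrow> (nat \<Rightarrow> nat) \<Rightarrow> (nat \<Rightarrow> nat) \<Rightarrow> (nat \<times> nat \<Rightarrow> nat) \<Rightarrow> (nat \<times> nat \<Rightarrow> nat)" where
  "pg_act p q \<alpha> \<beta> f = restrict (\<lambda>(x1, x2). \<beta> (f (\<alpha> x1, \<alpha> x2))) (Xset p q \<times> Xset p q)"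

text \<open>Group elements of S_X^{x2} \<times> U_q: alpha a permutation of X, beta a permutation of [q] fixing 1.\<close>
definition pg_elems :: "nat \<Rightarrow> nat \<Rightarrow> ((nat \<Rightarrow> nat) \<times> (nat \<Rightarrow> nat)) set" where
  "pg_elems p q = {(\<alpha>, \<beta>). \<alpha> permutes Xset p q \<and> \<beta> permutes {1..q} \<and> \<beta> 1 = 1}"

definition pg_orbit :: "nat \<Rightarrow> nat \<Rightarrow> (nat \<times> nat \<Rightarrow> nat) \<Rightarrow> (nat \<times> nat \<Rightarrow> nat) set" where
  "pg_orbit p q f = {pg_act p q \<alpha> \<beta> f | \<alpha> \<beta>. (\<alpha>, \<beta>) \<in> pg_elems p q}"

definition num_orbits :: "nat \<Rightarrow> nat \<Rightarrow> nat" where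
  "num_orbits p q = card (pg_orbit p q ` funs p q)"

text \<open>Partitions of n, represented by their multiplicity functions j (j i = number of parts equal to i).\<close>
definition partitions_mult :: "nat \<Rightarrow> (nat \<Rightarrow> nat) set" where
  "partitions_mult n = {j. (\<forall>i. j i \<noteq> 0 \<longrightarrow> 1 \<le> i \<and> i \<le> n) \<and> (\<Sum>i=1..n. i * j i) = n}"

definition N_formula :: "nat \<Rightarrow> nat \<Rightarrow> real" where
  "N_formula p q =
    (\<Sum>j\<in>partitions_mult (q - 1). \<Sum>k\<in>partitions_mult (p - q).
      inverse ((\<Prod>i=1..q-1. fact (j i) * real i ^ j i) * (\<Prod>i=1..p-q. fact (k i) * real i ^ k i))
      * (\<Prod>a=1..p-q. \<Prod>b=1..p-q.
           (1 + real (\<Sum>d | d dvd lcm a b. d * j d)) ^ (k a * k b * gcd a b)))"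

end

theory Submission
  imports Defs "HOL-Combinatorics.Orbits" "HOL-Algebra.Group_Action"
begin

text \<open>By Burnside's lemma the number of orbits is the average number of functions fixed by a
  group element \<open>(\<alpha>, \<beta>)\<close>. Such a function \<open>f\<close> satisfies \<open>\<beta> (f (\<pi> x)) = f x\<close> with
  \<open>\<pi> = \<alpha> \<times> \<alpha>\<close>, so along a cycle of \<open>\<pi>\<close> of length \<open>L\<close> it is determined by one value,
  which must be fixed by \<open>\<beta>\<^sup>L\<close>; there are \<open>1 + \<Sum>\<^sub>d\<^sub>|\<^sub>L d j\<^sub>d\<close> such values (the point \<open>1\<close>
  and the points of \<open>[q] - {1}\<close> on \<open>\<beta>\<close>-cycles of length dividing \<open>L\<close>). Two \<open>\<alpha>\<close>-cycles of
  lengths \<open>a\<close> and \<open>b\<close> yield \<open>gcd a b\<close> cycles of \<open>\<pi>\<close> of length \<open>lcm a b\<close>. The fixed count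
  therefore only depends on the cycle types \<open>k\<close> of \<open>\<alpha>\<close> and \<open>j\<close> of \<open>\<beta>\<close>, and grouping the
  permutations by cycle type, with \<open>n!/z\<^sub>k\<close> permutations of type \<open>k\<close>, gives the formula.\<close>

section \<open>Periodic points\<close>

definition periodic_point :: "('a \<Rightarrow> 'a) \<Rightarrow> 'a \<Rightarrow> bool" where
  "periodic_point f x \<longleftrightarrow> (\<exists>n>0. (f ^^ n) x = x)"

definition period :: "('a \<Rightarrow> 'a) \<Rightarrow> 'a \<Rightarrow> nat" where
  "period f x = (LEAST n. 0 < n \<and> (f ^^ n) x = x)"

lemma period_LeastI:
  assumes "periodic_point f x"
  shows "0 < period f x \<and> (f ^^ period f x) x = x"
proof -
  obtain n where "0 < n \<and> (f ^^ n) x = x" using assms unfolding periodic_point_def by auto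
  then show ?thesis unfolding period_def by (rule LeastI)
qed

lemma period_pos: "periodic_point f x \<Longrightarrow> 0 < period f x"
  by (simp add: period_LeastI)

lemma funpow_period: "periodic_point f x \<Longrightarrow> (f ^^ period f x) x = x"
  by (simp add: period_LeastI)

lemma funpow_less_period:
  assumes "0 < m" "m < period f x"
  shows "(f ^^ m) x \<noteq> x"
  using not_less_Least[of m "\<lambda>n. 0 < n \<and> (f ^^ n) x = x"] assms unfolding period_def by auto

lemma funpow_eq_self_iff_period_dvd:
  assumes "periodic_point f x"
  shows "(f ^^ m) x = x \<longleftrightarrow> period f x dvd m"
proof
  assume "(f ^^ m) x = x"
  then have "(f ^^ (m mod period f x)) x = x"
    using funpow_mod_eq[OF funpow_period[OF assms], where m=m] by simp
  moreover have "m mod period f x < period f x" using period_pos[OF assms] by simp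
  ultimately show "period f x dvd m"
    using funpow_less_period[of "m mod period f x" f x] by (auto simp: dvd_eq_mod_eq_0)
next
  assume "period f x dvd m"
  then show "(f ^^ m) x = x"
    using funpow_mod_eq[OF funpow_period[OF assms], where m=m] by (simp add: dvd_eq_mod_eq_0)
qed

lemma period_eqI:
  assumes "\<And>n. (f ^^ n) x = x \<longleftrightarrow> (f ^^ n) y = y"
  shows "period f x = period f y"
  unfolding period_def using assms by simp

lemma funpow_commute_apply: "(f ^^ n) ((f ^^ i) x) = (f ^^ i) ((f ^^ n) x)"
  by (metis add.commute comp_apply funpow_add)

lemma period_funpow:
  assumes "inj f"
  shows "period f ((f ^^ i) x) = period f x"
proof (rule period_eqI)
  fix n
  have "inj (f ^^ i)" using inj_fn[OF assms] .
  then show "(f ^^ n) ((f ^^ i) x) = (f ^^ i) x \<longleftrightarrow> (f ^^ n) x = x"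
    by (metis funpow_commute_apply injD)
qed

lemma permutes_periodic_point:
  assumes "finite S" "f permutes S"
  shows "periodic_point f x"
  using Orbits.permutation_self_in_orbit[OF permutes_imp_permutation[OF assms], of x]
  unfolding Orbits.orbit_altdef periodic_point_def by auto

lemma funpow_closed:
  assumes "\<And>y. y \<in> S \<Longrightarrow> f y \<in> S" "x \<in> S"
  shows "(f ^^ i) x \<in> S"
  by (induction i) (use assms in auto)

lemma funpow_fixpoint: "f x = x \<Longrightarrow> (f ^^ n) x = x"
  by (induction n) auto

lemma permutes_funpow_in:
  assumes "\<beta> permutes B" "v \<in> B"
  shows "(\<beta> ^^ i) v \<in> B"
  by (rule funpow_closed[of B \<beta>]) (use assms permutes_in_image[OF assms(1)] in auto)

definition cycle_of :: "('a \<Rightarrow> 'a) \<Rightarrow> 'a \<Rightarrow> 'a set" where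
  "cycle_of f x = (\<lambda>i. (f ^^ i) x) ` {..<period f x}"

lemma funpow_inj_below_period:
  assumes "periodic_point f x" "i < period f x" "j < period f x" "(f ^^ i) x = (f ^^ j) x"
  shows "i = j"
proof -
  have False if ij: "i < j" "j < period f x" "(f ^^ i) x = (f ^^ j) x" for i j
  proof -
    let ?L = "period f x"
    have "(f ^^ (?L - j + i)) x = (f ^^ (?L - j)) ((f ^^ i) x)" by (simp add: funpow_add)
    also have "\<dots> = (f ^^ (?L - j)) ((f ^^ j) x)" using ij by simp
    also have "\<dots> = (f ^^ (?L - j + j)) x" by (simp only: funpow_add comp_apply)
    also have "\<dots> = x" using ij funpow_period[OF assms(1)] by simp
    finally have "(f ^^ (?L - j + i)) x = x" .
    moreover have "0 < ?L - j + i" "?L - j + i < ?L" using ij by auto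
    ultimately show False using funpow_less_period[of "?L - j + i" f x] by simp
  qed
  then show ?thesis using assms(2-4) by (metis linorder_neqE_nat)
qed

lemma card_cycle_of:
  assumes "periodic_point f x"
  shows "card (cycle_of f x) = period f x"
proof -
  have "inj_on (\<lambda>i. (f ^^ i) x) {..<period f x}"
    using funpow_inj_below_period[OF assms] by (auto simp: inj_on_def)
  then show ?thesis unfolding cycle_of_def by (simp add: card_image)
qed

lemma finite_cycle_of: "finite (cycle_of f x)"
  unfolding cycle_of_def by simp

lemma funpow_in_cycle_of:
  assumes "periodic_point f x"
  shows "(f ^^ i) x \<in> cycle_of f x"
  unfolding cycle_of_def
proof (rule image_eqI)
  show "(f ^^ i) x = (f ^^ (i mod period f x)) x"
    using funpow_mod_eq[OF funpow_period[OF assms], where m=i] by simp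
  show "i mod period f x \<in> {..<period f x}" using period_pos[OF assms] by simp
qed

lemma self_in_cycle_of: "periodic_point f x \<Longrightarrow> x \<in> cycle_of f x"
  using funpow_in_cycle_of[of f x 0] by simp

lemma cycle_of_closed:
  assumes "periodic_point f x" "y \<in> cycle_of f x"
  shows "f y \<in> cycle_of f x"
proof -
  obtain i where "y = (f ^^ i) x" using assms(2) unfolding cycle_of_def by auto
  then have "f y = (f ^^ Suc i) x" by simp
  then show ?thesis using funpow_in_cycle_of[OF assms(1), of "Suc i"] by (simp del: funpow.simps)
qed

lemma cycle_of_subset:
  assumes "\<And>y. y \<in> S \<Longrightarrow> f y \<in> S" "x \<in> S"
  shows "cycle_of f x \<subseteq> S"
  unfolding cycle_of_def using funpow_closed[OF assms] by auto

lemma step_notin_cycle_of: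
  assumes "inj f" "periodic_point f x" "y \<notin> cycle_of f x"
  shows "f y \<notin> cycle_of f x"
proof
  assume "f y \<in> cycle_of f x"
  then obtain i where i: "f y = (f ^^ i) x" unfolding cycle_of_def by auto
  obtain k where k: "i + period f x = Suc k"
    using period_pos[OF assms(2)] by (metis add_gr_0 gr0_conv_Suc)
  have "f y = (f ^^ (i + period f x)) x"
    using i funpow_mod_eq[OF funpow_period[OF assms(2)]] by (metis mod_add_self2)
  also have "\<dots> = f ((f ^^ k) x)" by (simp add: k)
  finally have "y = (f ^^ k) x" using assms(1) by (simp add: inj_eq)
  then show False using assms(3) funpow_in_cycle_of[OF assms(2), of k] by simp
qed

lemma period_in_cycle_of:
  assumes "inj f" "y \<in> cycle_of f x"
  shows "period f y = period f x"
  using assms(2) period_funpow[OF assms(1)] unfolding cycle_of_def by auto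

lemma period_le_card:
  assumes "finite S" "\<And>y. y \<in> S \<Longrightarrow> f y \<in> S" "x \<in> S" "periodic_point f x"
  shows "period f x \<le> card S"
  using card_mono[OF assms(1) cycle_of_subset[of S f x, OF assms(2,3)]] card_cycle_of[OF assms(4)]
  by simp

section \<open>Maps fixed by twisting with permutations\<close>

text \<open>For \<open>\<pi> = \<alpha> \<times> \<alpha>\<close> these are the functions fixed by the power group element \<open>(\<alpha>, \<beta>)\<close>.\<close>

definition fixed_funs :: "('a \<Rightarrow> 'a) \<Rightarrow> ('b \<Rightarrow> 'b) \<Rightarrow> 'b set \<Rightarrow> 'a set \<Rightarrow> ('a \<Rightarrow> 'b) set" where
  "fixed_funs \<pi> \<beta> B S = {f \<in> S \<rightarrow>\<^sub>E B. \<forall>x\<in>S. \<beta> (f (\<pi> x)) = f x}"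

definition fixpoint_count :: "('b \<Rightarrow> 'b) \<Rightarrow> 'b set \<Rightarrow> nat \<Rightarrow> nat" where
  "fixpoint_count \<beta> B L = card {v \<in> B. (\<beta> ^^ L) v = v}"

lemma fixed_funs_cycle_funpow:
  assumes "periodic_point \<pi> s" "f \<in> fixed_funs \<pi> \<beta> B (cycle_of \<pi> s)"
  shows "f s = (\<beta> ^^ i) (f ((\<pi> ^^ i) s))"
proof (induction i)
  case 0 then show ?case by simp
next
  case (Suc i)
  have "(\<pi> ^^ i) s \<in> cycle_of \<pi> s" by (rule funpow_in_cycle_of[OF assms(1)])
  then have "\<beta> (f (\<pi> ((\<pi> ^^ i) s))) = f ((\<pi> ^^ i) s)"
    using assms(2) unfolding fixed_funs_def by auto
  moreover have "(\<beta> ^^ Suc i) z = (\<beta> ^^ i) (\<beta> z)" for z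
    by (simp add: funpow_Suc_right del: funpow.simps)
  moreover have "(\<pi> ^^ Suc i) s = \<pi> ((\<pi> ^^ i) s)" by simp
  ultimately have "(\<beta> ^^ Suc i) (f ((\<pi> ^^ Suc i) s)) = (\<beta> ^^ i) (f ((\<pi> ^^ i) s))"
    by (simp del: funpow.simps)
  then show ?case using Suc by simp
qed

lemma fixed_funs_cycle_eqI:
  assumes "periodic_point \<pi> s" "inj \<beta>"
    and f: "f \<in> fixed_funs \<pi> \<beta> B (cycle_of \<pi> s)" and g: "g \<in> fixed_funs \<pi> \<beta> B (cycle_of \<pi> s)"
    and "f s = g s"
  shows "f = g"
proof
  fix y
  show "f y = g y"
  proof (cases "y \<in> cycle_of \<pi> s")
    case True
    then obtain i where y: "y = (\<pi> ^^ i) s" unfolding cycle_of_def by auto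
    have "(\<beta> ^^ i) (f y) = (\<beta> ^^ i) (g y)"
      using fixed_funs_cycle_funpow[OF assms(1) f, of i] fixed_funs_cycle_funpow[OF assms(1) g, of i]
        assms(5) y by simp
    then show ?thesis using inj_fn[OF assms(2)] by (simp add: inj_eq)
  next
    case False
    then show ?thesis using f g unfolding fixed_funs_def by (auto simp: PiE_def extensional_def)
  qed
qed

text \<open>A fixed map on a cycle of length \<open>L\<close> is freely determined by a value \<open>v\<close> with
  \<open>\<beta>\<^sup>L v = v\<close> at one point: put \<open>f (\<pi>\<^sup>i s) = \<beta>\<^sup>L\<^sup>-\<^sup>i v\<close>.\<close>

lemma fixed_funs_cycle_exists:
  assumes "periodic_point \<pi> s" "\<beta> permutes B" "v \<in> B" "(\<beta> ^^ period \<pi> s) v = v"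
  shows "\<exists>f \<in> fixed_funs \<pi> \<beta> B (cycle_of \<pi> s). f s = v"
proof -
  let ?L = "period \<pi> s" and ?C = "cycle_of \<pi> s"
  have L0: "0 < ?L" and Ls: "(\<pi> ^^ ?L) s = s" using assms(1) by (auto simp: period_LeastI)
  have sC: "s \<in> ?C" by (rule self_in_cycle_of[OF assms(1)])
  define d where "d y = (LEAST i. (\<pi> ^^ i) s = y)" for y
  have d: "d ((\<pi> ^^ i) s) = i" if "i < ?L" for i
    unfolding d_def
  proof (rule Least_equality)
    fix j assume j: "(\<pi> ^^ j) s = (\<pi> ^^ i) s"
    show "i \<le> j"
      using funpow_inj_below_period[OF assms(1) that, of j] j that by (cases "j < ?L") auto
  qed simp
  define h where "h = restrict (\<lambda>y. (\<beta> ^^ (?L - d y)) v) ?C"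
  have "h \<in> fixed_funs \<pi> \<beta> B ?C"
    unfolding fixed_funs_def
  proof (intro CollectI conjI ballI)
    show "h \<in> ?C \<rightarrow>\<^sub>E B" unfolding h_def using permutes_funpow_in[OF assms(2,3)] by auto
  next
    fix y assume yC: "y \<in> ?C"
    then obtain i where i: "i < ?L" "y = (\<pi> ^^ i) s" unfolding cycle_of_def by auto
    have hy: "h y = (\<beta> ^^ (?L - i)) v" unfolding h_def using yC i d by simp
    have piC: "\<pi> y \<in> ?C" using cycle_of_closed[OF assms(1) yC] .
    show "\<beta> (h (\<pi> y)) = h y"
    proof (cases "Suc i < ?L")
      case True
      have "h (\<pi> y) = (\<beta> ^^ (?L - Suc i)) v" unfolding h_def using piC i d[OF True] by simp
      moreover have "?L - i = Suc (?L - Suc i)" using True by simp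
      ultimately show ?thesis using hy by simp
    next
      case False
      then have "Suc i = ?L" using i by simp
      then have "\<pi> y = s" and "?L - i = 1" using i Ls by (metis funpow.simps(2) o_apply, simp)
      then show ?thesis unfolding hy unfolding h_def using sC d[OF L0] assms(4) by simp
    qed
  qed
  moreover have "h s = v" unfolding h_def using sC d[OF L0] assms(4) by simp
  ultimately show ?thesis by blast
qed

lemma card_fixed_funs_cycle:
  assumes "periodic_point \<pi> s" "\<beta> permutes B"
  shows "card (fixed_funs \<pi> \<beta> B (cycle_of \<pi> s)) = fixpoint_count \<beta> B (period \<pi> s)"
  unfolding fixpoint_count_def
proof (rule bij_betw_same_card[of "\<lambda>f. f s"], rule bij_betwI')
  fix f g assume "f \<in> fixed_funs \<pi> \<beta> B (cycle_of \<pi> s)" "g \<in> fixed_funs \<pi> \<beta> B (cycle_of \<pi> s)"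
  then show "(f s = g s) = (f = g)"
    using fixed_funs_cycle_eqI[OF assms(1) permutes_inj[OF assms(2)]] by blast
next
  fix f assume f: "f \<in> fixed_funs \<pi> \<beta> B (cycle_of \<pi> s)"
  have "f s \<in> B" using f self_in_cycle_of[OF assms(1)] unfolding fixed_funs_def by auto
  moreover have "(\<beta> ^^ period \<pi> s) (f s) = f s"
    using fixed_funs_cycle_funpow[OF assms(1) f, of "period \<pi> s"] funpow_period[OF assms(1)] by simp
  ultimately show "f s \<in> {v \<in> B. (\<beta> ^^ period \<pi> s) v = v}" by simp
next
  fix v assume "v \<in> {v \<in> B. (\<beta> ^^ period \<pi> s) v = v}"
  then show "\<exists>f \<in> fixed_funs \<pi> \<beta> B (cycle_of \<pi> s). v = f s"
    using fixed_funs_cycle_exists[OF assms] by (metis (mono_tags, lifting) mem_Collect_eq)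
qed

lemma card_fixed_funs_Un:
  assumes disj: "A \<inter> C = {}" and A: "\<And>x. x \<in> A \<Longrightarrow> \<pi> x \<in> A" and C: "\<And>x. x \<in> C \<Longrightarrow> \<pi> x \<in> C"
  shows "card (fixed_funs \<pi> \<beta> B (A \<union> C)) = card (fixed_funs \<pi> \<beta> B A) * card (fixed_funs \<pi> \<beta> B C)"
proof -
  define join where "join fg = (\<lambda>x. if x \<in> A then fst fg x else snd fg x)" for fg :: "('a \<Rightarrow> 'b) \<times> ('a \<Rightarrow> 'b)"
  have "bij_betw (\<lambda>f. (restrict f A, restrict f C)) (fixed_funs \<pi> \<beta> B (A \<union> C))
          (fixed_funs \<pi> \<beta> B A \<times> fixed_funs \<pi> \<beta> B C)"
  proof (rule bij_betwI[where g = join])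
    show "(\<lambda>f. (restrict f A, restrict f C)) \<in> fixed_funs \<pi> \<beta> B (A \<union> C) \<rightarrow>
            fixed_funs \<pi> \<beta> B A \<times> fixed_funs \<pi> \<beta> B C"
      using A C unfolding fixed_funs_def by auto
    show "join \<in> fixed_funs \<pi> \<beta> B A \<times> fixed_funs \<pi> \<beta> B C \<rightarrow> fixed_funs \<pi> \<beta> B (A \<union> C)"
      using A C disj unfolding fixed_funs_def join_def by (fastforce simp: PiE_def extensional_def)
    show "join (restrict f A, restrict f C) = f" if "f \<in> fixed_funs \<pi> \<beta> B (A \<union> C)" for f
      using that unfolding fixed_funs_def join_def by (auto simp: PiE_def extensional_def)
    show "(restrict (join fg) A, restrict (join fg) C) = fg"
      if "fg \<in> fixed_funs \<pi> \<beta> B A \<times> fixed_funs \<pi> \<beta> B C" for fg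
      using that disj unfolding fixed_funs_def join_def
      by (cases fg) (fastforce simp: PiE_def extensional_def)
  qed
  then show ?thesis by (simp add: bij_betw_same_card card_cartesian_product)
qed

text \<open>Each cycle of length \<open>L\<close> contributes the factor \<open>fixpoint_count \<beta> B L\<close>, spread
  evenly as an \<open>L\<close>-th root over its \<open>L\<close> points; the fixed point \<open>v\<^sub>0\<close> makes the
  factors positive.\<close>

lemma card_fixed_funs_prod:
  assumes "inj \<pi>" "\<And>x. periodic_point \<pi> x" "\<beta> permutes B" "finite B" "v\<^sub>0 \<in> B" "\<beta> v\<^sub>0 = v\<^sub>0"
    and "finite S" "\<And>x. x \<in> S \<Longrightarrow> \<pi> x \<in> S"
  shows "real (card (fixed_funs \<pi> \<beta> B S)) =
     (\<Prod>x\<in>S. real (fixpoint_count \<beta> B (period \<pi> x)) powr (1 / real (period \<pi> x)))"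
  using assms(7,8)
proof (induction S rule: finite_psubset_induct)
  case (psubset S)
  let ?F = "\<lambda>x. real (fixpoint_count \<beta> B (period \<pi> x)) powr (1 / real (period \<pi> x))"
  show ?case
  proof (cases "S = {}")
    case True
    then show ?thesis by (simp add: fixed_funs_def PiE_empty_domain)
  next
    case False
    then obtain s where s: "s \<in> S" by auto
    let ?C = "cycle_of \<pi> s" and ?L = "period \<pi> s"
    have CS: "?C \<subseteq> S" by (rule cycle_of_subset[OF psubset.prems s])
    have sC: "s \<in> ?C" by (rule self_in_cycle_of[OF assms(2)])
    have C_closed: "\<pi> x \<in> ?C" if "x \<in> ?C" for x using cycle_of_closed[OF assms(2) that] .
    have rest_closed: "\<pi> x \<in> S - ?C" if "x \<in> S - ?C" for x
      using step_notin_cycle_of[OF assms(1,2)] psubset.prems that by auto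
    have IH: "real (card (fixed_funs \<pi> \<beta> B (S - ?C))) = (\<Prod>x\<in>S - ?C. ?F x)"
      using psubset.IH[of "S - ?C"] sC s rest_closed by blast
    have "0 < fixpoint_count \<beta> B ?L"
    proof -
      have "v\<^sub>0 \<in> {v \<in> B. (\<beta> ^^ ?L) v = v}" using assms(5,6) funpow_fixpoint[of \<beta> v\<^sub>0] by simp
      then show ?thesis unfolding fixpoint_count_def using assms(4) by (auto simp: card_gt_0_iff)
    qed
    then have "(\<Prod>x\<in>?C. ?F x) = (real (fixpoint_count \<beta> B ?L) powr (1 / real ?L)) ^ ?L"
      using period_in_cycle_of[OF assms(1)] card_cycle_of[OF assms(2)] by simp
    also have "\<dots> = real (fixpoint_count \<beta> B ?L)"
      using \<open>0 < fixpoint_count \<beta> B ?L\<close> period_pos[OF assms(2)[of s]] by (simp add: powr_power)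
    also have "\<dots> = real (card (fixed_funs \<pi> \<beta> B ?C))"
      using card_fixed_funs_cycle[OF assms(2,3)] by simp
    finally have cycle: "(\<Prod>x\<in>?C. ?F x) = real (card (fixed_funs \<pi> \<beta> B ?C))" .
    have "S = ?C \<union> (S - ?C)" using CS by auto
    then have "card (fixed_funs \<pi> \<beta> B S) = card (fixed_funs \<pi> \<beta> B ?C) * card (fixed_funs \<pi> \<beta> B (S - ?C))"
      using card_fixed_funs_Un[of ?C "S - ?C" \<pi> \<beta> B] C_closed rest_closed by (metis Diff_disjoint)
    then show ?thesis
      using prod.subset_diff[OF CS psubset.hyps(1), of ?F] cycle IH by simp
  qed
qed

section \<open>Cycle types of permutations\<close>

definition period_count :: "'a set \<Rightarrow> ('a \<Rightarrow> 'a) \<Rightarrow> nat \<Rightarrow> nat" where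
  "period_count S \<sigma> d = card {x \<in> S. period \<sigma> x = d}"

lemma card_filter_Un_disjoint:
  assumes "finite A" "finite B" "A \<inter> B = {}"
  shows "card {x \<in> A \<union> B. P x} = card {x \<in> A. P x} + card {x \<in> B. P x}"
proof -
  have "{x \<in> A \<union> B. P x} = {x \<in> A. P x} \<union> {x \<in> B. P x}" by auto
  then show ?thesis using assms by (simp add: card_Un_disjoint disjoint_iff)
qed

lemma card_cycle_of_period_eq:
  assumes "inj f" "periodic_point f x"
  shows "card {y \<in> cycle_of f x. period f y = i} = (if i = period f x then period f x else 0)"
proof -
  have "{y \<in> cycle_of f x. period f y = i} = (if i = period f x then cycle_of f x else {})"
    using period_in_cycle_of[OF assms(1)] by auto
  then show ?thesis using card_cycle_of[OF assms(2)] by simp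
qed

text \<open>Composing with \<open>transpose a b\<close> for a new point \<open>a\<close> inserts \<open>a\<close> into the cycle of \<open>b\<close>
  right after \<open>\<sigma>\<^sup>L\<^sup>-\<^sup>1 b\<close>, and leaves the other cycles alone.\<close>

lemma cycle_of_insert_transpose:
  assumes fin: "finite S" and sp: "\<sigma> permutes S" and a: "a \<notin> S" and b: "b \<in> S"
  shows "period (transpose a b \<circ> \<sigma>) b = period \<sigma> b + 1"
    and "cycle_of (transpose a b \<circ> \<sigma>) b = insert a (cycle_of \<sigma> b)"
proof -
  let ?\<tau> = "transpose a b \<circ> \<sigma>" and ?L = "period \<sigma> b"
  have per_\<sigma>: "periodic_point \<sigma> b" by (rule permutes_periodic_point[OF fin sp])
  have in_S: "\<sigma> y \<in> S" if "y \<in> S" for y using sp that by (simp add: permutes_in_image)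
  have \<sigma>a: "\<sigma> a = a" using sp a by (simp add: permutes_not_in)
  have L0: "0 < ?L" and Lb: "(\<sigma> ^^ ?L) b = b" using per_\<sigma> by (auto simp: period_LeastI)
  have before: "(?\<tau> ^^ i) b = (\<sigma> ^^ i) b" if "i < ?L" for i
    using that
  proof (induction i)
    case (Suc i)
    have "(\<sigma> ^^ Suc i) b \<noteq> b" using funpow_less_period[of "Suc i" \<sigma> b] Suc.prems by simp
    moreover have "(\<sigma> ^^ Suc i) b \<noteq> a" using funpow_closed[of S \<sigma> b "Suc i", OF in_S b] a by auto
    ultimately show ?case using Suc by simp
  qed simp
  obtain m where m: "?L = Suc m" using L0 gr0_conv_Suc by blast
  have at_L: "(?\<tau> ^^ ?L) b = a"
    using before[of m] m Lb by simp
  show per_\<tau>: "period ?\<tau> b = ?L + 1"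
    unfolding period_def[of ?\<tau> b]
  proof (rule Least_equality)
    show "0 < ?L + 1 \<and> (?\<tau> ^^ (?L + 1)) b = b" using at_L \<sigma>a by simp
  next
    fix k assume k: "0 < k \<and> (?\<tau> ^^ k) b = b"
    have "\<not> k < ?L"
    proof
      assume "k < ?L"
      then show False using before[of k] funpow_less_period[of k \<sigma> b] k by simp
    qed
    moreover have "k \<noteq> ?L" using at_L k a b by auto
    ultimately show "?L + 1 \<le> k" by linarith
  qed
  have "cycle_of ?\<tau> b = (\<lambda>i. (?\<tau> ^^ i) b) ` ({..<?L} \<union> {?L})"
    unfolding cycle_of_def per_\<tau> by (simp add: lessThan_Suc)
  also have "\<dots> = insert a ((\<lambda>i. (\<sigma> ^^ i) b) ` {..<?L})"
    using before at_L by (auto simp: image_iff)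
  finally show "cycle_of ?\<tau> b = insert a (cycle_of \<sigma> b)" unfolding cycle_of_def .
qed

lemma period_insert_transpose_outside:
  assumes fin: "finite S" and sp: "\<sigma> permutes S" and a: "a \<notin> S"
    and x: "x \<in> S - cycle_of \<sigma> b"
  shows "period (transpose a b \<circ> \<sigma>) x = period \<sigma> x"
proof -
  let ?\<tau> = "transpose a b \<circ> \<sigma>" and ?R = "S - cycle_of \<sigma> b"
  have per_\<sigma>: "periodic_point \<sigma> b" by (rule permutes_periodic_point[OF fin sp])
  have step: "\<sigma> y \<in> ?R \<and> ?\<tau> y = \<sigma> y" if "y \<in> ?R" for y
  proof -
    have "\<sigma> y \<in> ?R"
      using that step_notin_cycle_of[OF permutes_inj[OF sp] per_\<sigma>] sp by (auto simp: permutes_in_image)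
    moreover have "\<sigma> y \<noteq> b" using \<open>\<sigma> y \<in> ?R\<close> self_in_cycle_of[OF per_\<sigma>] by auto
    moreover have "\<sigma> y \<noteq> a" using \<open>\<sigma> y \<in> ?R\<close> a by auto
    ultimately show ?thesis by simp
  qed
  have "(?\<tau> ^^ n) x = (\<sigma> ^^ n) x \<and> (\<sigma> ^^ n) x \<in> ?R" for n
    by (induction n) (use x step in auto)
  then show ?thesis unfolding period_def by simp
qed

lemma period_count_insert_transpose:
  assumes fin: "finite S" and sp: "\<sigma> permutes S" and a: "a \<notin> S" and b: "b \<in> S"
  shows "period_count S \<sigma> i + (if i = period \<sigma> b + 1 then period \<sigma> b + 1 else 0)
       = period_count (insert a S) (transpose a b \<circ> \<sigma>) i + (if i = period \<sigma> b then period \<sigma> b else 0)"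
proof -
  let ?\<tau> = "transpose a b \<circ> \<sigma>" and ?C = "cycle_of \<sigma> b"
  define R where "R = S - ?C"
  have \<tau>p: "?\<tau> permutes insert a S"
    by (meson insertI1 insertI2 permutes_compose permutes_subset permutes_swap_id sp subset_insertI b)
  have per_\<sigma>: "periodic_point \<sigma> b" by (rule permutes_periodic_point[OF fin sp])
  have per_\<tau>: "periodic_point ?\<tau> b" by (rule permutes_periodic_point[OF _ \<tau>p]) (use fin in simp)
  have CS: "?C \<subseteq> S" by (rule cycle_of_subset) (use sp b in \<open>auto simp: permutes_in_image\<close>)
  have finR: "finite R" using fin unfolding R_def by simp
  have "{x \<in> R. period ?\<tau> x = i} = {x \<in> R. period \<sigma> x = i}"
    using period_insert_transpose_outside[OF fin sp a] unfolding R_def by auto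
  moreover have "S = R \<union> ?C" "R \<inter> ?C = {}" using CS unfolding R_def by auto
  moreover have "insert a S = R \<union> cycle_of ?\<tau> b" "R \<inter> cycle_of ?\<tau> b = {}"
    using CS a cycle_of_insert_transpose(2)[OF fin sp a b] unfolding R_def by auto
  ultimately show ?thesis
    unfolding period_count_def
    using card_filter_Un_disjoint[OF finR finite_cycle_of, where P = "\<lambda>x. period \<sigma> x = i"]
      card_filter_Un_disjoint[OF finR finite_cycle_of, where P = "\<lambda>x. period ?\<tau> x = i"]
      card_cycle_of_period_eq[OF permutes_inj[OF sp] per_\<sigma>, of i]
      card_cycle_of_period_eq[OF permutes_inj[OF \<tau>p] per_\<tau>, of i]
      cycle_of_insert_transpose(1)[OF fin sp a b] by simp
qed

lemma period_count_insert_fixed: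
  assumes fin: "finite S" and sp: "\<sigma> permutes S" and a: "a \<notin> S"
  shows "period_count (insert a S) (transpose a a \<circ> \<sigma>) i = period_count S \<sigma> i + (if i = 1 then 1 else 0)"
proof -
  have "period \<sigma> a = 1" unfolding period_def
    by (rule Least_equality) (use sp a in \<open>auto simp: permutes_not_in\<close>)
  then have "{x \<in> insert a S. period \<sigma> x = i} =
      (if i = 1 then insert a {x \<in> S. period \<sigma> x = i} else {x \<in> S. period \<sigma> x = i})"
    by auto
  then show ?thesis unfolding period_count_def using fin a by simp
qed

text \<open>The factor \<open>z\<^sub>k = \<Prod>\<^sub>i k\<^sub>i! i^k\<^sub>i\<close> of the formula, the order of the centralizer in \<open>S\<^sub>n\<close> of a
  permutation of cycle type \<open>k\<close>.\<close>

definition centralizer_order :: "nat \<Rightarrow> (nat \<Rightarrow> nat) \<Rightarrow> real" where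
  "centralizer_order M k = (\<Prod>i=1..M. fact (k i) * real i ^ k i)"

lemma sum_fun_upd:
  fixes g :: "nat \<Rightarrow> nat \<Rightarrow> 'b::comm_monoid_add"
  assumes "finite I" "i0 \<in> I"
  shows "(\<Sum>i\<in>I. g i ((k(i0 := v)) i)) + g i0 (k i0) = (\<Sum>i\<in>I. g i (k i)) + g i0 v"
proof -
  have "(\<Sum>i\<in>I. g i ((k(i0 := v)) i)) = g i0 v + (\<Sum>i\<in>I - {i0}. g i ((k(i0 := v)) i))"
    using sum.remove[OF assms, of "\<lambda>i. g i ((k(i0 := v)) i)"] by simp
  moreover have "(\<Sum>i\<in>I. g i (k i)) = g i0 (k i0) + (\<Sum>i\<in>I - {i0}. g i (k i))"
    using sum.remove[OF assms, of "\<lambda>i. g i (k i)"] by simp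
  moreover have "(\<Sum>i\<in>I - {i0}. g i ((k(i0 := v)) i)) = (\<Sum>i\<in>I - {i0}. g i (k i))"
    by (rule sum.cong) auto
  ultimately show ?thesis by (simp add: ac_simps)
qed

lemma prod_fun_upd:
  fixes g :: "nat \<Rightarrow> nat \<Rightarrow> 'b::comm_monoid_mult"
  assumes "finite I" "i0 \<in> I"
  shows "(\<Prod>i\<in>I. g i ((k(i0 := v)) i)) * g i0 (k i0) = (\<Prod>i\<in>I. g i (k i)) * g i0 v"
proof -
  have "(\<Prod>i\<in>I. g i ((k(i0 := v)) i)) = g i0 v * (\<Prod>i\<in>I - {i0}. g i ((k(i0 := v)) i))"
    using prod.remove[OF assms, of "\<lambda>i. g i ((k(i0 := v)) i)"] by simp
  moreover have "(\<Prod>i\<in>I. g i (k i)) = g i0 (k i0) * (\<Prod>i\<in>I - {i0}. g i (k i))"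
    using prod.remove[OF assms, of "\<lambda>i. g i (k i)"] by simp
  moreover have "(\<Prod>i\<in>I - {i0}. g i ((k(i0 := v)) i)) = (\<Prod>i\<in>I - {i0}. g i (k i))"
    by (rule prod.cong) auto
  ultimately show ?thesis by (simp add: ac_simps)
qed

lemma centralizer_order_pos: "0 < centralizer_order M k"
  unfolding centralizer_order_def by (intro prod_pos) auto

lemma centralizer_order_incr:
  assumes "i \<in> {1..M}"
  shows "centralizer_order M (k(i := Suc (k i))) = centralizer_order M k * (real (Suc (k i)) * real i)"
proof -
  let ?g = "\<lambda>i m. fact m * real i ^ m :: real"
  have "centralizer_order M (k(i := Suc (k i))) * ?g i (k i) = centralizer_order M k * ?g i (Suc (k i))"
    unfolding centralizer_order_def using prod_fun_upd[of "{1..M}" i ?g k] assms by simp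
  also have "\<dots> = (centralizer_order M k * (real (Suc (k i)) * real i)) * ?g i (k i)"
    by (simp add: algebra_simps)
  finally show ?thesis using assms by simp
qed

lemma centralizer_order_mono_neutral:
  assumes "\<And>i. M < i \<Longrightarrow> k i = 0" "M \<le> M'"
  shows "centralizer_order M' k = centralizer_order M k"
  unfolding centralizer_order_def
  by (rule prod.mono_neutral_right) (use assms in auto)

lemma partitions_mult_support:
  assumes "k \<in> partitions_mult n" "k i \<noteq> 0"
  shows "1 \<le> i" "i \<le> n"
  using assms unfolding partitions_mult_def by auto

lemma partitions_mult_eq_0:
  assumes "k \<in> partitions_mult n" "i \<notin> {1..n}"
  shows "k i = 0"
  using partitions_mult_support[OF assms(1), of i] assms(2) by (cases "k i = 0") auto

lemma partitions_mult_sum: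
  assumes "k \<in> partitions_mult n"
  shows "(\<Sum>i=1..n. i * k i) = n"
  using assms unfolding partitions_mult_def by auto

lemma finite_partitions_mult: "finite (partitions_mult n)"
proof (rule finite_subset)
  show "partitions_mult n \<subseteq> {f. \<forall>x. (x \<in> {1..n} \<longrightarrow> f x \<in> {0..n}) \<and> (x \<notin> {1..n} \<longrightarrow> f x = 0)}"
  proof
    fix k assume k: "k \<in> partitions_mult n"
    have "\<forall>x. (x \<in> {1..n} \<longrightarrow> k x \<in> {0..n}) \<and> (x \<notin> {1..n} \<longrightarrow> k x = 0)"
    proof (intro allI conjI impI)
      fix x assume hx: "x \<in> {1..n}"
      have "x * k x \<le> (\<Sum>i=1..n. i * k i)" by (rule member_le_sum) (use hx in auto)
      hence A: "x * k x \<le> n" using partitions_mult_sum[OF k] by simp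
      have B: "1 * k x \<le> x * k x" by (rule mult_le_mono1) (use hx in simp)
      have "k x \<le> n" using A B by linarith
      thus "k x \<in> {0..n}" by simp
    next
      fix x assume "x \<notin> {1..n}"
      thus "k x = 0" by (rule partitions_mult_eq_0[OF k])
    qed
    thus "k \<in> {f. \<forall>x. (x \<in> {1..n} \<longrightarrow> f x \<in> {0..n}) \<and> (x \<notin> {1..n} \<longrightarrow> f x = 0)}" by simp
  qed
  show "finite {f. \<forall>x. (x \<in> {1..n} \<longrightarrow> f x \<in> {0..n}) \<and> (x \<notin> {1..n} \<longrightarrow> f x = (0::nat))}"
    by (rule finite_set_of_finite_funs) auto
qed

lemma partitions_mult_SucD:
  assumes "\<And>i. k i \<noteq> 0 \<Longrightarrow> 1 \<le> i \<and> i \<le> Suc n" "(\<Sum>i=1..Suc n. i * k i) = n"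
  shows "k \<in> partitions_mult n"
proof -
  have "Suc n * k (Suc n) \<le> (\<Sum>i=1..Suc n. i * k i)" by (rule member_le_sum) auto
  then have "k (Suc n) = 0" using assms(2) by (cases "k (Suc n)") auto
  then have "k i \<noteq> 0 \<longrightarrow> 1 \<le> i \<and> i \<le> n" for i using assms(1)[of i] by (cases "i = Suc n") auto
  moreover have "(\<Sum>i=1..n. i * k i) = n" using assms(2) \<open>k (Suc n) = 0\<close> by simp
  ultimately show ?thesis unfolding partitions_mult_def by blast
qed

lemma partitions_mult_remove_one:
  assumes "k \<in> partitions_mult (Suc n)" "1 \<le> k 1"
  shows "k(1 := k 1 - 1) \<in> partitions_mult n"
proof (rule partitions_mult_SucD)
  show "(\<Sum>i=1..Suc n. i * (k(1 := k 1 - 1)) i) = n"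
    using sum_fun_upd[of "{1..Suc n}" 1 "\<lambda>i x. i * x" k "k 1 - 1"] partitions_mult_sum[OF assms(1)] assms(2)
    by simp
qed (use partitions_mult_support[OF assms(1)] in \<open>auto split: if_splits\<close>)

definition shorten_part :: "(nat \<Rightarrow> nat) \<Rightarrow> nat \<Rightarrow> nat \<Rightarrow> nat" where
  "shorten_part k l = (k(l := k l + 1))(l + 1 := k (l + 1) - 1)"

lemma partitions_mult_shorten_part:
  assumes "k \<in> partitions_mult (Suc n)" "1 \<le> l" "1 \<le> k (l + 1)"
  shows "shorten_part k l \<in> partitions_mult n"
proof (rule partitions_mult_SucD)
  let ?k1 = "k(l := k l + 1)"
  have l: "l + 1 \<le> Suc n" using partitions_mult_support[of k "Suc n" "l+1"] assms by simp
  have "(\<Sum>i=1..Suc n. i * ?k1 i) + l * k l = (\<Sum>i=1..Suc n. i * k i) + l * (k l + 1)"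
    using sum_fun_upd[of "{1..Suc n}" l "\<lambda>i x. i * x" k "k l + 1"] assms(2) l by simp
  moreover have "(\<Sum>i=1..Suc n. i * shorten_part k l i) + (l + 1) * k (l + 1)
      = (\<Sum>i=1..Suc n. i * ?k1 i) + (l + 1) * (k (l + 1) - 1)"
    using sum_fun_upd[of "{1..Suc n}" "l + 1" "\<lambda>i x. i * x" ?k1 "k (l + 1) - 1"] l
    unfolding shorten_part_def by simp
  moreover have "(l + 1) * k (l + 1) = (l + 1) * (k (l + 1) - 1) + (l + 1)"
    using assms(3) by (cases "k (l + 1)") auto
  ultimately show "(\<Sum>i=1..Suc n. i * shorten_part k l i) = n"
    using partitions_mult_sum[OF assms(1)] by (simp add: algebra_simps)
  show "1 \<le> i \<and> i \<le> Suc n" if "shorten_part k l i \<noteq> 0" for i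
    using that partitions_mult_support[OF assms(1), of i] assms(2) l
    unfolding shorten_part_def by (auto split: if_splits)
qed

lemma centralizer_order_remove_one:
  assumes "1 \<le> k 1" "1 \<le> M"
  shows "centralizer_order M k = centralizer_order M (k(1 := k 1 - 1)) * real (k 1)"
proof -
  define k' where "k' = k(1 := k 1 - 1)"
  have "k = k'(1 := Suc (k' 1))" and "Suc (k' 1) = k 1" using assms(1) unfolding k'_def by auto
  then show ?thesis using centralizer_order_incr[of 1 M k'] assms(2) unfolding k'_def by simp
qed

lemma centralizer_order_shorten_part:
  assumes "1 \<le> l" "l + 1 \<le> M" "1 \<le> k (l + 1)"
  shows "centralizer_order M (shorten_part k l) * (real (k (l + 1)) * real (l + 1))
       = centralizer_order M k * (real (k l + 1) * real l)"
proof -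
  define k' where "k' = shorten_part k l"
  have "k(l := Suc (k l)) = k'(l + 1 := Suc (k' (l + 1)))" and "Suc (k' (l + 1)) = k (l + 1)"
    using assms(3) unfolding k'_def shorten_part_def by auto
  then show ?thesis
    using centralizer_order_incr[of l M k] centralizer_order_incr[of "l + 1" M k'] assms(1,2)
    unfolding k'_def by simp
qed

lemma permutes_insert_decomp:
  assumes "\<sigma>' permutes insert a S"
  obtains b \<sigma> where "b \<in> insert a S" "\<sigma> permutes S" "\<sigma>' = transpose a b \<circ> \<sigma>"
proof -
  have "\<sigma>' \<in> {p. p permutes insert a S}" using assms by simp
  then show ?thesis using that unfolding permutes_insert by auto
qed

lemma dvd_period_count:
  assumes "finite S" "\<sigma> permutes S"
  shows "i dvd period_count S \<sigma> i"
  using assms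
proof (induction S arbitrary: \<sigma> i rule: finite_induct)
  case empty
  then show ?case by (simp add: period_count_def)
next
  case (insert a S)
  obtain b \<sigma>\<^sub>0 where b: "b \<in> insert a S" and \<sigma>\<^sub>0: "\<sigma>\<^sub>0 permutes S" and \<sigma>: "\<sigma> = transpose a b \<circ> \<sigma>\<^sub>0"
    using permutes_insert_decomp[OF insert.prems] .
  have IH: "i dvd period_count S \<sigma>\<^sub>0 i" by (rule insert.IH[OF \<sigma>\<^sub>0])
  show ?case
  proof (cases "b = a")
    case True
    then show ?thesis
      using period_count_insert_fixed[OF insert.hyps(1) \<sigma>\<^sub>0 insert.hyps(2), of i] \<sigma> IH by (cases "i = 1") auto
  next
    case False
    let ?l = "period \<sigma>\<^sub>0 b"
    have tr: "period_count S \<sigma>\<^sub>0 i + (if i = ?l + 1 then ?l + 1 else 0)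
        = period_count (insert a S) \<sigma> i + (if i = ?l then ?l else 0)"
      using period_count_insert_transpose[OF insert.hyps(1) \<sigma>\<^sub>0 insert.hyps(2), of b i] b False \<sigma> by simp
    consider "i = ?l" | "i = ?l + 1" | "i \<noteq> ?l \<and> i \<noteq> ?l + 1" by blast
    then show ?thesis
    proof cases
      case 1
      then have "period_count S \<sigma>\<^sub>0 i = period_count (insert a S) \<sigma> i + i" using tr by simp
      then show ?thesis using IH by (simp add: dvd_add_left_iff)
    next
      case 2
      then have "period_count (insert a S) \<sigma> i = period_count S \<sigma>\<^sub>0 i + i" using tr by simp
      then show ?thesis using IH by simp
    qed (use tr IH in simp)
  qed
qed

lemma period_in_range:
  assumes "finite S" "\<sigma> permutes S" "x \<in> S"
  shows "period \<sigma> x \<in> {1..card S}"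
proof -
  have p: "periodic_point \<sigma> x" by (rule permutes_periodic_point[OF assms(1,2)])
  have "period \<sigma> x \<le> card S"
    by (rule period_le_card[OF assms(1) _ assms(3) p]) (use permutes_in_image[OF assms(2)] in auto)
  thus ?thesis using period_pos[OF p] by auto
qed

lemma period_count_eq_0:
  assumes "finite S" "\<sigma> permutes S" "i \<notin> {1..card S}"
  shows "period_count S \<sigma> i = 0"
proof -
  have "{x \<in> S. period \<sigma> x = i} = {}" using period_in_range[OF assms(1,2)] assms(3) by fastforce
  thus ?thesis unfolding period_count_def by (metis card.empty)
qed

lemma sum_period_count:
  assumes "finite S" "\<sigma> permutes S"
  shows "(\<Sum>i=1..card S. period_count S \<sigma> i) = card S"
proof -
  have "(\<Sum>i\<in>{1..card S}. sum (\<lambda>_. 1::nat) {x \<in> S. period \<sigma> x = i}) = sum (\<lambda>_. 1) S"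
    by (rule sum.group) (use assms period_in_range[OF assms] in auto)
  thus ?thesis unfolding period_count_def by simp
qed

definition cycle_type :: "'a set \<Rightarrow> ('a \<Rightarrow> 'a) \<Rightarrow> nat \<Rightarrow> nat" where
  "cycle_type S \<sigma> i = period_count S \<sigma> i div i"

lemma cycle_type_in_partitions_mult:
  assumes "finite S" "\<sigma> permutes S"
  shows "cycle_type S \<sigma> \<in> partitions_mult (card S)"
proof -
  have A: "\<forall>i. cycle_type S \<sigma> i \<noteq> 0 \<longrightarrow> 1 \<le> i \<and> i \<le> card S"
  proof (intro allI impI)
    fix i assume "cycle_type S \<sigma> i \<noteq> 0"
    hence "period_count S \<sigma> i \<noteq> 0" unfolding cycle_type_def by (metis div_0)
    thus "1 \<le> i \<and> i \<le> card S" using period_count_eq_0[OF assms, of i] by auto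
  qed
  have "(\<Sum>i=1..card S. i * cycle_type S \<sigma> i) = (\<Sum>i=1..card S. period_count S \<sigma> i)"
    by (rule sum.cong) (use dvd_period_count[OF assms] in \<open>auto simp: cycle_type_def\<close>)
  hence "(\<Sum>i=1..card S. i * cycle_type S \<sigma> i) = card S" using sum_period_count[OF assms] by simp
  thus ?thesis using A unfolding partitions_mult_def by blast
qed

lemma cycle_type_eq_iff:
  assumes "finite S" "\<sigma> permutes S" "k \<in> partitions_mult n"
  shows "cycle_type S \<sigma> = k \<longleftrightarrow> (\<forall>i. period_count S \<sigma> i = i * k i)"
proof
  assume h: "cycle_type S \<sigma> = k"
  show "\<forall>i. period_count S \<sigma> i = i * k i"
  proof
    fix i
    have "i dvd period_count S \<sigma> i" by (rule dvd_period_count[OF assms(1,2)])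
    thus "period_count S \<sigma> i = i * k i" using h unfolding cycle_type_def by (metis dvd_mult_div_cancel)
  qed
next
  assume h: "\<forall>i. period_count S \<sigma> i = i * k i"
  have k0: "k 0 = 0" using assms(3) unfolding partitions_mult_def by auto
  show "cycle_type S \<sigma> = k"
  proof
    fix i show "cycle_type S \<sigma> i = k i" using h k0 unfolding cycle_type_def by (cases "i = 0") auto
  qed
qed

definition perms_of_type :: "'a set \<Rightarrow> (nat \<Rightarrow> nat) \<Rightarrow> ('a \<Rightarrow> 'a) set" where
  "perms_of_type S k = {\<sigma>. \<sigma> permutes S \<and> (\<forall>i. period_count S \<sigma> i = i * k i)}"

lemma counts_add_fixed_point_iff:
  fixes c k :: "nat \<Rightarrow> nat"
  shows "(\<forall>i. c i + (if i = 1 then 1 else 0) = i * k i) \<longleftrightarrow> (1 \<le> k 1 \<and> (\<forall>i. c i = i * (k(1 := k 1 - 1)) i))"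
proof
  assume H: "\<forall>i. c i + (if i = 1 then 1 else 0) = i * k i"
  have k1: "1 \<le> k 1" using H[rule_format, of 1] by simp
  show "1 \<le> k 1 \<and> (\<forall>i. c i = i * (k(1 := k 1 - 1)) i)"
  proof (intro conjI allI k1)
    fix i show "c i = i * (k(1 := k 1 - 1)) i" using H[rule_format, of i] k1 by (cases "i = 1") auto
  qed
next
  assume H: "1 \<le> k 1 \<and> (\<forall>i. c i = i * (k(1 := k 1 - 1)) i)"
  show "\<forall>i. c i + (if i = 1 then 1 else 0) = i * k i"
  proof
    fix i show "c i + (if i = 1 then 1 else 0) = i * k i" using H by (cases "i = 1") auto
  qed
qed

lemma counts_lengthen_cycle_iff:
  fixes c c' k :: "nat \<Rightarrow> nat"
  assumes shift: "\<And>i. c i + (if i = l + 1 then l + 1 else 0) = c' i + (if i = l then l else 0)"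
  shows "(\<forall>i. c' i = i * k i) \<longleftrightarrow> (1 \<le> k (l + 1) \<and> (\<forall>i. c i = i * shorten_part k l i))"
proof
  assume H: "\<forall>i. c' i = i * k i"
  have e: "c (l + 1) + (l + 1) = (l + 1) * k (l + 1)" using shift[of "l+1"] H by simp
  hence K: "1 \<le> k (l + 1)" by (cases "k (l+1)") auto
  then obtain K where K': "k (l + 1) = Suc K" by (cases "k (l+1)") auto
  show "1 \<le> k (l + 1) \<and> (\<forall>i. c i = i * shorten_part k l i)"
  proof (intro conjI allI K)
    fix i
    consider "i = l" | "i = l + 1" | "i \<noteq> l \<and> i \<noteq> l + 1" by blast
    then show "c i = i * shorten_part k l i"
    proof cases
      case 1 then show ?thesis using shift[of l] H unfolding shorten_part_def by simp
    next
      case 2 then show ?thesis using e K' unfolding shorten_part_def by simp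
    next
      case 3 then show ?thesis using shift[of i] H unfolding shorten_part_def by simp
    qed
  qed
next
  assume H: "1 \<le> k (l + 1) \<and> (\<forall>i. c i = i * shorten_part k l i)"
  then obtain K where K': "k (l + 1) = Suc K" by (cases "k (l+1)") auto
  show "\<forall>i. c' i = i * k i"
  proof
    fix i
    consider "i = l" | "i = l + 1" | "i \<noteq> l \<and> i \<noteq> l + 1" by blast
    then show "c' i = i * k i"
    proof cases
      case 1 then show ?thesis using shift[of l] H unfolding shorten_part_def by simp
    next
      case 2 then show ?thesis using shift[of "l+1"] H K' unfolding shorten_part_def by simp
    next
      case 3 then show ?thesis using shift[of i] H unfolding shorten_part_def by simp
    qed
  qed
qed

section \<open>Counting permutations by cycle type\<close>

lemma permutes_insert_transpose:
  assumes "\<sigma> permutes S" "b \<in> insert a S"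
  shows "transpose a b \<circ> \<sigma> permutes insert a S"
  by (rule permutes_compose[OF permutes_subset[OF assms(1)] permutes_swap_id]) (use assms(2) in auto)

lemma inj_on_transpose_compose:
  assumes "a \<notin> S"
  shows "inj_on (\<lambda>(b, p). transpose a b \<circ> p) (SIGMA b:insert a S. {p. p permutes S \<and> Q b p})"
proof (rule inj_onI, clarsimp)
  fix b p c q
  assume "p permutes S" "q permutes S" and eq: "transpose a b \<circ> p = transpose a c \<circ> q"
  then have "p a = a" "q a = a" using assms by (auto simp: permutes_not_in)
  then have "b = c" using fun_cong[OF eq, of a] by simp
  with eq have "transpose a b \<circ> (transpose a b \<circ> p) = transpose a b \<circ> (transpose a b \<circ> q)" by simp
  then show "b = c \<and> p = q" using \<open>b = c\<close> by (simp add: o_assoc)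
qed

text \<open>The permutations of \<open>S\<close> that become of type \<open>k\<close> on \<open>insert a S\<close> after \<open>a\<close> is put
  in front of \<open>b\<close> (or made a fixed point when \<open>b = a\<close>).\<close>

definition transpose_preimage :: "'a \<Rightarrow> 'a \<Rightarrow> 'a set \<Rightarrow> (nat \<Rightarrow> nat) \<Rightarrow> ('a \<Rightarrow> 'a) set" where
  "transpose_preimage a b S k = {\<sigma>. \<sigma> permutes S \<and> transpose a b \<circ> \<sigma> \<in> perms_of_type (insert a S) k}"

lemma card_perms_of_type_insert:
  assumes fin: "finite S" and a: "a \<notin> S"
  shows "card (perms_of_type (insert a S) k) = (\<Sum>b\<in>insert a S. card (transpose_preimage a b S k))"
proof -
  let ?T = "\<lambda>b. transpose_preimage a b S k" and ?g = "\<lambda>(b, p). transpose a b \<circ> p"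
  have finT: "finite (?T b)" for b
    using finite_permutations[OF fin] unfolding transpose_preimage_def by (rule rev_finite_subset) auto
  have "perms_of_type (insert a S) k = ?g ` (SIGMA b:insert a S. ?T b)"
  proof safe
    fix \<sigma>' assume \<sigma>': "\<sigma>' \<in> perms_of_type (insert a S) k"
    then have "\<sigma>' \<in> {p. p permutes insert a S}" unfolding perms_of_type_def by simp
    then obtain b \<sigma> where "b \<in> insert a S" "\<sigma> permutes S" "\<sigma>' = transpose a b \<circ> \<sigma>"
      unfolding permutes_insert by auto
    then show "\<sigma>' \<in> ?g ` (SIGMA b:insert a S. ?T b)"
      using \<sigma>' unfolding transpose_preimage_def by (auto simp: image_iff)
  qed (auto simp: transpose_preimage_def)
  moreover have "inj_on ?g (SIGMA b:insert a S. ?T b)"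
    unfolding transpose_preimage_def by (rule inj_on_transpose_compose[OF a])
  ultimately show ?thesis using fin finT by (simp add: card_image card_SigmaI)
qed

lemma transpose_preimage_self:
  assumes "finite S" "a \<notin> S"
  shows "transpose_preimage a a S k = (if 1 \<le> k 1 then perms_of_type S (k(1 := k 1 - 1)) else {})"
proof -
  have "transpose_preimage a a S k =
      {\<sigma>. \<sigma> permutes S \<and> 1 \<le> k 1 \<and> (\<forall>i. period_count S \<sigma> i = i * (k(1 := k 1 - 1)) i)}"
    unfolding transpose_preimage_def perms_of_type_def
    using period_count_insert_fixed[OF assms(1) _ assms(2)] counts_add_fixed_point_iff
      permutes_insert_transpose[of _ S a a] by auto
  then show ?thesis unfolding perms_of_type_def by auto
qed

lemma transpose_preimage_iff:
  assumes "finite S" "a \<notin> S" "b \<in> S" "\<sigma> permutes S"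
  shows "\<sigma> \<in> transpose_preimage a b S k \<longleftrightarrow>
    1 \<le> k (period \<sigma> b + 1) \<and> \<sigma> \<in> perms_of_type S (shorten_part k (period \<sigma> b))"
  unfolding transpose_preimage_def perms_of_type_def
  using counts_lengthen_cycle_iff[OF period_count_insert_transpose[OF assms(1,4,2,3)]]
    permutes_insert_transpose[OF assms(4), of b a]
    assms(3,4) by auto

text \<open>Double counting of the pairs \<open>(b, \<sigma>)\<close>: a permutation \<open>\<sigma>\<close> of type \<open>shorten_part k l\<close> has
  \<open>l (k\<^sub>l + 1)\<close> points \<open>b\<close> on cycles of length \<open>l\<close>.\<close>

lemma sum_card_transpose_preimage:
  assumes fin: "finite S" and a: "a \<notin> S"
  shows "(\<Sum>b\<in>S. card (transpose_preimage a b S k)) =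
    (\<Sum>l=1..card S. if 1 \<le> k (l + 1) then card (perms_of_type S (shorten_part k l)) * (l * (k l + 1)) else 0)"
proof -
  define P where "P = {\<sigma>. \<sigma> permutes S}"
  define R where "R \<sigma> l \<longleftrightarrow> 1 \<le> k (l + 1) \<and> \<sigma> \<in> perms_of_type S (shorten_part k l)" for \<sigma> l
  have finP: "finite P" unfolding P_def using finite_permutations[OF fin] .
  have "(\<Sum>b\<in>S. card (transpose_preimage a b S k)) = (\<Sum>b\<in>S. \<Sum>\<sigma>\<in>P. if R \<sigma> (period \<sigma> b) then 1 else 0)"
  proof (rule sum.cong[OF refl])
    fix b assume "b \<in> S"
    have "\<sigma> \<in> transpose_preimage a b S k \<longleftrightarrow> \<sigma> \<in> P \<and> R \<sigma> (period \<sigma> b)" for \<sigma>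
    proof (cases "\<sigma> permutes S")
      case True
      then show ?thesis using transpose_preimage_iff[OF fin a \<open>b \<in> S\<close> True] unfolding R_def P_def by simp
    qed (simp add: transpose_preimage_def P_def)
    then have "transpose_preimage a b S k = {\<sigma> \<in> P. R \<sigma> (period \<sigma> b)}" by blast
    then show "card (transpose_preimage a b S k) = (\<Sum>\<sigma>\<in>P. if R \<sigma> (period \<sigma> b) then 1 else 0)"
      using sum.inter_filter[OF finP, of "\<lambda>_. 1::nat", symmetric] by simp
  qed
  also have "\<dots> = (\<Sum>\<sigma>\<in>P. \<Sum>l=1..card S. if R \<sigma> l then period_count S \<sigma> l else 0)"
  proof (subst sum.swap, rule sum.cong[OF refl])
    fix \<sigma> assume "\<sigma> \<in> P"
    then have \<sigma>: "\<sigma> permutes S" unfolding P_def by simp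
    have "(\<Sum>b\<in>S. if R \<sigma> (period \<sigma> b) then 1 else 0) =
          (\<Sum>l\<in>{1..card S}. \<Sum>b\<in>{x \<in> S. period \<sigma> x = l}. if R \<sigma> (period \<sigma> b) then 1 else (0::nat))"
      by (rule sum.group[symmetric]) (use fin period_in_range[OF fin \<sigma>] in auto)
    also have "\<dots> = (\<Sum>l=1..card S. if R \<sigma> l then period_count S \<sigma> l else 0)"
      by (rule sum.cong[OF refl]) (auto simp: period_count_def)
    finally show "(\<Sum>b\<in>S. if R \<sigma> (period \<sigma> b) then 1 else 0) = \<dots>" .
  qed
  also have "\<dots> = (\<Sum>l=1..card S. \<Sum>\<sigma>\<in>P. if R \<sigma> l then l * (k l + 1) else 0)"
  proof (subst sum.swap, rule sum.cong[OF refl], rule sum.cong[OF refl])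
    fix l \<sigma>
    show "(if R \<sigma> l then period_count S \<sigma> l else 0) = (if R \<sigma> l then l * (k l + 1) else 0)"
      by (simp add: R_def perms_of_type_def shorten_part_def)
  qed
  also have "\<dots> = (\<Sum>l=1..card S. if 1 \<le> k (l + 1) then card (perms_of_type S (shorten_part k l)) * (l * (k l + 1)) else 0)"
  proof (rule sum.cong[OF refl])
    fix l
    have "{\<sigma> \<in> P. R \<sigma> l} = (if 1 \<le> k (l + 1) then perms_of_type S (shorten_part k l) else {})"
      unfolding R_def P_def perms_of_type_def by auto
    then show "(\<Sum>\<sigma>\<in>P. if R \<sigma> l then l * (k l + 1) else 0) =
      (if 1 \<le> k (l + 1) then card (perms_of_type S (shorten_part k l)) * (l * (k l + 1)) else 0)"
      using finP by (simp add: sum.inter_filter[symmetric])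
  qed
  finally show ?thesis .
qed

lemma centralizer_order_partitions_mult:
  assumes "k \<in> partitions_mult n" "n \<le> M"
  shows "centralizer_order M k = centralizer_order n k"
  by (rule centralizer_order_mono_neutral) (use partitions_mult_eq_0[OF assms(1)] assms(2) in auto)

lemma centralizer_order_remove_one_ratio:
  assumes "k \<in> partitions_mult (Suc n)" "1 \<le> k 1"
  shows "c / centralizer_order n (k(1 := k 1 - 1)) = c * real (k 1) / centralizer_order (Suc n) k"
proof -
  let ?k' = "k(1 := k 1 - 1)"
  have "centralizer_order n ?k' = centralizer_order (Suc n) ?k'"
    using centralizer_order_partitions_mult[OF partitions_mult_remove_one[OF assms], of "Suc n"] by simp
  also have "\<dots> = centralizer_order (Suc n) k / real (k 1)"
    using centralizer_order_remove_one[of k "Suc n"] assms(2) by (simp add: eq_divide_eq)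
  finally show ?thesis by simp
qed

lemma centralizer_order_shorten_part_ratio:
  assumes "k \<in> partitions_mult (Suc n)" "1 \<le> l" "l \<le> n" "1 \<le> k (l + 1)"
  shows "c / centralizer_order n (shorten_part k l) * real (l * (k l + 1))
       = c * real ((l + 1) * k (l + 1)) / centralizer_order (Suc n) k"
proof -
  define A where "A = real (l * (k l + 1))"
  define B where "B = real ((l + 1) * k (l + 1))"
  have "A \<noteq> 0" "B \<noteq> 0" using assms(2,4) unfolding A_def B_def by (simp_all del: of_nat_mult)
  have "centralizer_order n (shorten_part k l) = centralizer_order (Suc n) (shorten_part k l)"
    using centralizer_order_partitions_mult[OF partitions_mult_shorten_part[OF assms(1,2,4)], of "Suc n"]
    by simp
  also have "\<dots> = centralizer_order (Suc n) k * A / B"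
    using centralizer_order_shorten_part[of l "Suc n" k] assms(2-4) \<open>B \<noteq> 0\<close>
    unfolding A_def B_def by (simp add: eq_divide_eq algebra_simps)
  finally show ?thesis
    unfolding A_def[symmetric] B_def[symmetric]
    using \<open>A \<noteq> 0\<close> \<open>B \<noteq> 0\<close> centralizer_order_pos[of "Suc n" k] centralizer_order_pos[of n "shorten_part k l"]
    by (simp add: field_simps)
qed

lemma card_perms_of_type:
  assumes "finite S" "k \<in> partitions_mult (card S)"
  shows "real (card (perms_of_type S k)) = fact (card S) / centralizer_order (card S) k"
  using assms
proof (induction S arbitrary: k rule: finite_induct)
  case empty
  then have "k = (\<lambda>_. 0)" unfolding partitions_mult_def by (auto simp: fun_eq_iff)
  then have "perms_of_type ({} :: 'a set) k = {id}" unfolding perms_of_type_def period_count_def by auto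
  then show ?case by (simp add: centralizer_order_def)
next
  case (insert a S)
  let ?n = "card S" and ?Z = "centralizer_order (Suc (card S)) k"
  have k: "k \<in> partitions_mult (Suc ?n)" using insert by simp
  have fixed: "real (card (transpose_preimage a a S k)) = fact ?n * real (k 1) / ?Z"
  proof (cases "1 \<le> k 1")
    case True
    then have "real (card (transpose_preimage a a S k)) = real (card (perms_of_type S (k(1 := k 1 - 1))))"
      using transpose_preimage_self[OF insert.hyps, of k] by simp
    also have "\<dots> = fact ?n / centralizer_order ?n (k(1 := k 1 - 1))"
      by (rule insert.IH[OF partitions_mult_remove_one[OF k True]])
    finally show ?thesis by (simp only: centralizer_order_remove_one_ratio[OF k True])
  qed (use transpose_preimage_self[OF insert.hyps, of k] in simp)
  have moved: "real (if 1 \<le> k (l + 1) then card (perms_of_type S (shorten_part k l)) * (l * (k l + 1)) else 0)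
      = fact ?n * real ((l + 1) * k (l + 1)) / ?Z" if "l \<in> {1..?n}" for l
  proof (cases "1 \<le> k (l + 1)")
    case True
    have "1 \<le> l" "l \<le> ?n" using that by auto
    have "real (if 1 \<le> k (l + 1) then card (perms_of_type S (shorten_part k l)) * (l * (k l + 1)) else 0)
        = real (card (perms_of_type S (shorten_part k l))) * real (l * (k l + 1))"
      using True by (simp only: if_True of_nat_mult)
    also have "\<dots> = fact ?n / centralizer_order ?n (shorten_part k l) * real (l * (k l + 1))"
      by (simp only: insert.IH[OF partitions_mult_shorten_part[OF k \<open>1 \<le> l\<close> True]])
    finally show ?thesis
      by (simp only: centralizer_order_shorten_part_ratio[OF k \<open>1 \<le> l\<close> \<open>l \<le> ?n\<close> True])
  qed (simp add: Suc_le_eq)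
  have "(\<Sum>l=1..?n. (l + 1) * k (l + 1)) = (\<Sum>i=Suc 1..Suc ?n. i * k i)"
    using sum.shift_bounds_cl_Suc_ivl[of "\<lambda>i. i * k i" 1 ?n] by simp
  then have "k 1 + (\<Sum>l=1..?n. (l + 1) * k (l + 1)) = (\<Sum>i=1..Suc ?n. i * k i)"
    by (simp add: sum.atLeast_Suc_atMost)
  also have "\<dots> = Suc ?n" by (rule partitions_mult_sum[OF k])
  finally have parts: "real (k 1) + (\<Sum>l=1..?n. real ((l + 1) * k (l + 1))) = real (Suc ?n)"
    by (metis of_nat_add of_nat_sum)
  have "real (card (perms_of_type (insert a S) k)) = real (card (transpose_preimage a a S k)) +
      (\<Sum>l=1..?n. real (if 1 \<le> k (l + 1) then card (perms_of_type S (shorten_part k l)) * (l * (k l + 1)) else 0))"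
    using card_perms_of_type_insert[OF insert.hyps, of k] sum_card_transpose_preimage[OF insert.hyps, of k]
      insert.hyps by (simp add: of_nat_sum[symmetric] del: of_nat_sum)
  also have "\<dots> = fact ?n * real (k 1) / ?Z + (\<Sum>l=1..?n. fact ?n * real ((l + 1) * k (l + 1)) / ?Z)"
    unfolding fixed by (rule arg_cong[OF sum.cong[OF refl moved]])
  also have "\<dots> = fact ?n / ?Z * (real (k 1) + (\<Sum>l=1..?n. real ((l + 1) * k (l + 1))))"
    by (simp only: sum_distrib_left distrib_left times_divide_eq_left times_divide_eq_right mult.commute)
  also have "\<dots> = fact (card (insert a S)) / centralizer_order (card (insert a S)) k"
    using insert.hyps by (simp only: parts card_insert_disjoint fact_Suc) (simp add: field_simps)
  finally show ?case .
qed

lemma sum_permutations_by_cycle_type: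
  fixes F :: "(nat \<Rightarrow> nat) \<Rightarrow> real"
  assumes "finite S"
  shows "(\<Sum>\<sigma>\<in>{\<sigma>. \<sigma> permutes S}. F (cycle_type S \<sigma>)) =
         (\<Sum>k\<in>partitions_mult (card S). fact (card S) / centralizer_order (card S) k * F k)"
proof -
  let ?P = "{\<sigma>. \<sigma> permutes S}"
  have finP: "finite ?P" using finite_permutations[OF assms] .
  have "(\<Sum>\<sigma>\<in>?P. F (cycle_type S \<sigma>)) = (\<Sum>k\<in>partitions_mult (card S). \<Sum>\<sigma>\<in>{\<sigma> \<in> ?P. cycle_type S \<sigma> = k}. F (cycle_type S \<sigma>))"
    by (rule sum.group[symmetric]) (use finP finite_partitions_mult cycle_type_in_partitions_mult[OF assms] in auto)
  also have "\<dots> = (\<Sum>k\<in>partitions_mult (card S). real (card (perms_of_type S k)) * F k)"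
  proof (rule sum.cong[OF refl])
    fix k assume k: "k \<in> partitions_mult (card S)"
    have "{\<sigma> \<in> ?P. cycle_type S \<sigma> = k} = perms_of_type S k"
      unfolding perms_of_type_def using cycle_type_eq_iff[OF assms _ k] by auto
    moreover have "(\<Sum>\<sigma>\<in>{\<sigma> \<in> ?P. cycle_type S \<sigma> = k}. F (cycle_type S \<sigma>)) = (\<Sum>\<sigma>\<in>{\<sigma> \<in> ?P. cycle_type S \<sigma> = k}. F k)"
      by (rule sum.cong) auto
    ultimately show "(\<Sum>\<sigma>\<in>{\<sigma> \<in> ?P. cycle_type S \<sigma> = k}. F (cycle_type S \<sigma>)) = real (card (perms_of_type S k)) * F k"
      by simp
  qed
  also have "\<dots> = (\<Sum>k\<in>partitions_mult (card S). fact (card S) / centralizer_order (card S) k * F k)"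
    by (rule sum.cong[OF refl]) (simp add: card_perms_of_type[OF assms])
  finally show ?thesis .
qed

section \<open>Functions fixed by a power group element\<close>

lemma prod_by_period:
  fixes h :: "nat \<Rightarrow> 'b::comm_monoid_mult"
  assumes "finite S" "\<sigma> permutes S"
  shows "(\<Prod>x\<in>S. h (period \<sigma> x)) = (\<Prod>a=1..card S. h a ^ period_count S \<sigma> a)"
proof -
  have "(\<Prod>x\<in>S. h (period \<sigma> x)) = (\<Prod>a\<in>{1..card S}. \<Prod>x\<in>{x \<in> S. period \<sigma> x = a}. h (period \<sigma> x))"
    by (rule prod.group[symmetric]) (use assms period_in_range[OF assms] in auto)
  also have "\<dots> = (\<Prod>a=1..card S. h a ^ period_count S \<sigma> a)"
  proof (rule prod.cong[OF refl])
    fix a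
    have "(\<Prod>x\<in>{x \<in> S. period \<sigma> x = a}. h (period \<sigma> x)) = (\<Prod>x\<in>{x \<in> S. period \<sigma> x = a}. h a)"
      by (rule prod.cong) auto
    then show "(\<Prod>x\<in>{x \<in> S. period \<sigma> x = a}. h (period \<sigma> x)) = h a ^ period_count S \<sigma> a"
      unfolding period_count_def by simp
  qed
  finally show ?thesis .
qed

text \<open>The points of \<open>insert v\<^sub>0 Q\<close> fixed by \<open>\<beta>\<^sup>L\<close>: \<open>v\<^sub>0\<close> itself and the points on cycles of
  length dividing \<open>L\<close>.\<close>

lemma fixpoint_count_eq:
  assumes "finite Q" "\<beta> permutes Q" "v\<^sub>0 \<notin> Q" "0 < L"
  shows "fixpoint_count \<beta> (insert v\<^sub>0 Q) L = 1 + (\<Sum>d | d dvd L. d * cycle_type Q \<beta> d)"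
proof -
  have \<beta>v: "\<beta> v\<^sub>0 = v\<^sub>0" using assms(2,3) by (simp add: permutes_not_in)
  have "{v \<in> insert v\<^sub>0 Q. (\<beta> ^^ L) v = v} = insert v\<^sub>0 {v \<in> Q. period \<beta> v dvd L}"
    using funpow_fixpoint[of \<beta> v\<^sub>0 L, OF \<beta>v]
      funpow_eq_self_iff_period_dvd[OF permutes_periodic_point[OF assms(1,2)]] by auto
  then have "fixpoint_count \<beta> (insert v\<^sub>0 Q) L = 1 + card {v \<in> Q. period \<beta> v dvd L}"
    unfolding fixpoint_count_def using assms(1,3) by simp
  also have "card {v \<in> Q. period \<beta> v dvd L} = (\<Sum>d | d dvd L. period_count Q \<beta> d)"
  proof -
    have "finite {d. d dvd L}" using assms(4) by simp
    then have "(\<Sum>d | d dvd L. sum (\<lambda>_. 1::nat) {v \<in> {v \<in> Q. period \<beta> v dvd L}. period \<beta> v = d})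
        = sum (\<lambda>_. 1) {v \<in> Q. period \<beta> v dvd L}"
      by (intro sum.group) (use assms(1) in auto)
    moreover have "{v \<in> {v \<in> Q. period \<beta> v dvd L}. period \<beta> v = d} = {v \<in> Q. period \<beta> v = d}"
      if "d dvd L" for d
      using that by auto
    ultimately show ?thesis unfolding period_count_def by simp
  qed
  also have "(\<Sum>d | d dvd L. period_count Q \<beta> d) = (\<Sum>d | d dvd L. d * cycle_type Q \<beta> d)"
    by (rule sum.cong[OF refl]) (use dvd_period_count[OF assms(1,2)] in \<open>auto simp: cycle_type_def\<close>)
  finally show ?thesis .
qed

definition pair_perm :: "('a \<Rightarrow> 'a) \<Rightarrow> 'a set \<Rightarrow> 'a \<times> 'a \<Rightarrow> 'a \<times> 'a" where
  "pair_perm \<alpha> X = (\<lambda>(y\<^sub>1, y\<^sub>2). if y\<^sub>1 \<in> X \<and> y\<^sub>2 \<in> X then (\<alpha> y\<^sub>1, \<alpha> y\<^sub>2) else (y\<^sub>1, y\<^sub>2))"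

lemma pair_perm_permutes:
  assumes "finite X" "\<alpha> permutes X"
  shows "pair_perm \<alpha> X permutes (X \<times> X)"
proof (rule inj_imp_permutes)
  show "inj_on (pair_perm \<alpha> X) (X \<times> X)"
    unfolding pair_perm_def inj_on_def using permutes_inj[OF assms(2)] by (auto simp: inj_eq)
  show "finite (X \<times> X)" using assms(1) by simp
  show "pair_perm \<alpha> X x \<in> X \<times> X" if "x \<in> X \<times> X" for x
    using that permutes_in_image[OF assms(2)] unfolding pair_perm_def by auto
  show "pair_perm \<alpha> X x = x" if "x \<notin> X \<times> X" for x using that unfolding pair_perm_def by (cases x) auto
qed

lemma funpow_pair_perm:
  assumes "\<alpha> permutes X" "x\<^sub>1 \<in> X" "x\<^sub>2 \<in> X"
  shows "(pair_perm \<alpha> X ^^ n) (x\<^sub>1, x\<^sub>2) = ((\<alpha> ^^ n) x\<^sub>1, (\<alpha> ^^ n) x\<^sub>2)"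
proof (induction n)
  case (Suc n)
  have "(\<alpha> ^^ n) x\<^sub>1 \<in> X" "(\<alpha> ^^ n) x\<^sub>2 \<in> X" using permutes_funpow_in[OF assms(1)] assms(2,3) by auto
  then show ?case using Suc by (simp add: pair_perm_def)
qed simp

lemma period_pair_perm:
  assumes "finite X" "\<alpha> permutes X" "x\<^sub>1 \<in> X" "x\<^sub>2 \<in> X"
  shows "period (pair_perm \<alpha> X) (x\<^sub>1, x\<^sub>2) = lcm (period \<alpha> x\<^sub>1) (period \<alpha> x\<^sub>2)"
proof -
  have per\<^sub>2: "periodic_point (pair_perm \<alpha> X) x" for x
    using permutes_periodic_point[OF _ pair_perm_permutes[OF assms(1,2)]] assms(1) by simp
  have per: "periodic_point \<alpha> x" for x by (rule permutes_periodic_point[OF assms(1,2)])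
  have "period (pair_perm \<alpha> X) (x\<^sub>1, x\<^sub>2) dvd m \<longleftrightarrow> lcm (period \<alpha> x\<^sub>1) (period \<alpha> x\<^sub>2) dvd m" for m
    using funpow_eq_self_iff_period_dvd[OF per\<^sub>2[of "(x\<^sub>1, x\<^sub>2)"], of m] funpow_pair_perm[OF assms(2-4), of m]
      funpow_eq_self_iff_period_dvd[OF per] by simp
  then show ?thesis by (meson dvd_antisym dvd_refl)
qed

lemma fixed_funs_pair_perm:
  assumes "\<alpha> permutes X"
  shows "{f \<in> (X \<times> X) \<rightarrow>\<^sub>E B. restrict (\<lambda>(x\<^sub>1, x\<^sub>2). \<beta> (f (\<alpha> x\<^sub>1, \<alpha> x\<^sub>2))) (X \<times> X) = f}
       = fixed_funs (pair_perm \<alpha> X) \<beta> B (X \<times> X)"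
proof -
  have "restrict (\<lambda>(x\<^sub>1, x\<^sub>2). \<beta> (f (\<alpha> x\<^sub>1, \<alpha> x\<^sub>2))) (X \<times> X) = f \<longleftrightarrow>
      (\<forall>x\<in>X \<times> X. \<beta> (f (pair_perm \<alpha> X x)) = f x)"
    if f: "f \<in> (X \<times> X) \<rightarrow>\<^sub>E B" for f
  proof
    assume h: "restrict (\<lambda>(x\<^sub>1, x\<^sub>2). \<beta> (f (\<alpha> x\<^sub>1, \<alpha> x\<^sub>2))) (X \<times> X) = f"
    show "\<forall>x\<in>X \<times> X. \<beta> (f (pair_perm \<alpha> X x)) = f x"
    proof
      fix x assume "x \<in> X \<times> X"
      then show "\<beta> (f (pair_perm \<alpha> X x)) = f x" using fun_cong[OF h, of x] unfolding pair_perm_def by auto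
    qed
  next
    assume "\<forall>x\<in>X \<times> X. \<beta> (f (pair_perm \<alpha> X x)) = f x"
    then show "restrict (\<lambda>(x\<^sub>1, x\<^sub>2). \<beta> (f (\<alpha> x\<^sub>1, \<alpha> x\<^sub>2))) (X \<times> X) = f"
      using PiE_arb[OF f] unfolding pair_perm_def by (auto simp: fun_eq_iff)
  qed
  then show ?thesis unfolding fixed_funs_def by auto
qed

lemma root_lcm_power:
  fixes g :: real
  assumes "0 < g" "0 < a" "0 < b"
  shows "(g powr (1 / real (lcm a b))) ^ (a * m * (b * n)) = g ^ (m * n * gcd a b)"
proof -
  have "a * m * (b * n) = lcm a b * (m * n * gcd a b)"
    using prod_gcd_lcm_nat[of a b] by (simp add: algebra_simps)
  moreover have "(g powr (1 / real (lcm a b))) ^ lcm a b = g"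
    using assms by (simp add: powr_realpow[symmetric] powr_powr lcm_pos_nat)
  ultimately show ?thesis by (simp only: power_mult)
qed

text \<open>The number of functions fixed by a power group element whose components have cycle types
  \<open>k\<close> (on \<open>X\<close>) and \<open>j\<close> (on \<open>[q] - {1}\<close>): the summand of \<^const>\<open>N_formula\<close>.\<close>

definition fixed_count_by_type :: "nat \<Rightarrow> (nat \<Rightarrow> nat) \<Rightarrow> (nat \<Rightarrow> nat) \<Rightarrow> real" where
  "fixed_count_by_type n k j = (\<Prod>a=1..n. \<Prod>b=1..n.
     (1 + real (\<Sum>d | d dvd lcm a b. d * j d)) ^ (k a * k b * gcd a b))"

lemma card_fixed_funs_pair:
  assumes finX: "finite X" and \<alpha>: "\<alpha> permutes X" and finQ: "finite Q" and \<beta>: "\<beta> permutes Q"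
    and v\<^sub>0: "v\<^sub>0 \<notin> Q"
  shows "real (card {f \<in> (X \<times> X) \<rightarrow>\<^sub>E insert v\<^sub>0 Q. restrict (\<lambda>(x\<^sub>1, x\<^sub>2). \<beta> (f (\<alpha> x\<^sub>1, \<alpha> x\<^sub>2))) (X \<times> X) = f})
       = fixed_count_by_type (card X) (cycle_type X \<alpha>) (cycle_type Q \<beta>)"
proof -
  let ?\<pi> = "pair_perm \<alpha> X" and ?B = "insert v\<^sub>0 Q" and ?n = "card X"
  define \<phi> where "\<phi> L = real (fixpoint_count \<beta> ?B L) powr (1 / real L)" for L
  have \<pi>: "?\<pi> permutes (X \<times> X)" by (rule pair_perm_permutes[OF finX \<alpha>])
  have count: "fixpoint_count \<beta> ?B (lcm a b) = 1 + (\<Sum>d | d dvd lcm a b. d * cycle_type Q \<beta> d)"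
    if "a \<in> {1..?n}" "b \<in> {1..?n}" for a b
    using fixpoint_count_eq[OF finQ \<beta> v\<^sub>0] that by (simp add: lcm_pos_nat)
  have period_count: "period_count X \<alpha> a = a * cycle_type X \<alpha> a" for a
    using dvd_period_count[OF finX \<alpha>, of a] unfolding cycle_type_def by simp
  have "real (card (fixed_funs ?\<pi> \<beta> ?B (X \<times> X))) = (\<Prod>x\<in>X \<times> X. \<phi> (period ?\<pi> x))"
    unfolding \<phi>_def
  proof (rule card_fixed_funs_prod)
    show "\<beta> permutes ?B" using \<beta> by (rule permutes_subset) auto
    show "\<beta> v\<^sub>0 = v\<^sub>0" using \<beta> v\<^sub>0 by (simp add: permutes_not_in)
  qed (use permutes_inj[OF \<pi>] permutes_periodic_point[OF _ \<pi>] permutes_in_image[OF \<pi>] finX finQ in auto)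
  also have "\<dots> = (\<Prod>(x\<^sub>1, x\<^sub>2)\<in>X \<times> X. \<phi> (lcm (period \<alpha> x\<^sub>1) (period \<alpha> x\<^sub>2)))"
    by (rule prod.cong[OF refl]) (auto simp: period_pair_perm[OF finX \<alpha>])
  also have "\<dots> = (\<Prod>x\<^sub>1\<in>X. \<Prod>x\<^sub>2\<in>X. \<phi> (lcm (period \<alpha> x\<^sub>1) (period \<alpha> x\<^sub>2)))"
    by (rule prod.cartesian_product[symmetric])
  also have "\<dots> = (\<Prod>x\<^sub>1\<in>X. \<Prod>b=1..?n. \<phi> (lcm (period \<alpha> x\<^sub>1) b) ^ period_count X \<alpha> b)"
    by (rule prod.cong[OF refl]) (rule prod_by_period[OF finX \<alpha>])
  also have "\<dots> = (\<Prod>a=1..?n. (\<Prod>b=1..?n. \<phi> (lcm a b) ^ period_count X \<alpha> b) ^ period_count X \<alpha> a)"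
    by (rule prod_by_period[OF finX \<alpha>])
  also have "\<dots> = (\<Prod>a=1..?n. \<Prod>b=1..?n. \<phi> (lcm a b) ^ (period_count X \<alpha> a * period_count X \<alpha> b))"
    by (simp add: prod_power_distrib power_mult[symmetric] mult.commute)
  also have "\<dots> = fixed_count_by_type ?n (cycle_type X \<alpha>) (cycle_type Q \<beta>)"
    unfolding fixed_count_by_type_def period_count
  proof (intro prod.cong refl)
    fix a b assume ab: "a \<in> {1..?n}" "b \<in> {1..?n}"
    then show "\<phi> (lcm a b) ^ (a * cycle_type X \<alpha> a * (b * cycle_type X \<alpha> b)) =
        (1 + real (\<Sum>d | d dvd lcm a b. d * cycle_type Q \<beta> d)) ^ (cycle_type X \<alpha> a * cycle_type X \<alpha> b * gcd a b)"
      unfolding \<phi>_def count[OF ab] of_nat_add of_nat_1 by (intro root_lcm_power) (use ab in \<open>auto simp del: of_nat_sum intro: add_pos_nonneg\<close>)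
  qed
  finally show ?thesis by (simp only: fixed_funs_pair_perm[OF \<alpha>])
qed

section \<open>The power group action\<close>

text \<open>The first component acts by precomposition, so it is multiplied in reverse order.\<close>

definition power_group :: "nat \<Rightarrow> nat \<Rightarrow> ((nat \<Rightarrow> nat) \<times> (nat \<Rightarrow> nat)) monoid" where
  "power_group p q =
    \<lparr>carrier = pg_elems p q, monoid.mult = (\<lambda>g h. (fst h \<circ> fst g, snd g \<circ> snd h)), one = (id, id)\<rparr>"

definition power_action ::
    "nat \<Rightarrow> nat \<Rightarrow> (nat \<Rightarrow> nat) \<times> (nat \<Rightarrow> nat) \<Rightarrow> (nat \<times> nat \<Rightarrow> nat) \<Rightarrow> nat \<times> nat \<Rightarrow> nat" where
  "power_action p q g = restrict (pg_act p q (fst g) (snd g)) (funs p q)"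

lemma pg_act_funs:
  assumes "f \<in> funs p q" "(\<alpha>, \<beta>) \<in> pg_elems p q"
  shows "pg_act p q \<alpha> \<beta> f \<in> funs p q"
proof -
  have a: "\<alpha> permutes Xset p q" and b: "\<beta> permutes {1..q}" using assms(2) unfolding pg_elems_def by auto
  have "\<beta> (f (\<alpha> x1, \<alpha> x2)) \<in> {1..q}" if "x1 \<in> Xset p q" "x2 \<in> Xset p q" for x1 x2
  proof -
    have "(\<alpha> x1, \<alpha> x2) \<in> Xset p q \<times> Xset p q" using that permutes_in_image[OF a] by auto
    hence "f (\<alpha> x1, \<alpha> x2) \<in> {1..q}" using assms(1) unfolding funs_def by auto
    thus ?thesis using permutes_in_image[OF b] by simp
  qed
  thus ?thesis unfolding funs_def pg_act_def by auto
qed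

lemma pg_act_comp:
  assumes "f \<in> funs p q" "\<alpha> permutes Xset p q"
  shows "pg_act p q \<alpha> \<beta> (pg_act p q \<alpha>' \<beta>' f) = pg_act p q (\<alpha>' \<circ> \<alpha>) (\<beta> \<circ> \<beta>') f"
proof
  fix x
  show "pg_act p q \<alpha> \<beta> (pg_act p q \<alpha>' \<beta>' f) x = pg_act p q (\<alpha>' \<circ> \<alpha>) (\<beta> \<circ> \<beta>') f x"
  proof (cases "x \<in> Xset p q \<times> Xset p q")
    case True
    then obtain x1 x2 where x: "x = (x1, x2)" "x1 \<in> Xset p q" "x2 \<in> Xset p q" by auto
    have "\<alpha> x1 \<in> Xset p q" "\<alpha> x2 \<in> Xset p q" using x permutes_in_image[OF assms(2)] by auto
    then show ?thesis using x unfolding pg_act_def by simp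
  next
    case False
    then show ?thesis unfolding pg_act_def by simp
  qed
qed

lemma pg_act_id:
  assumes "f \<in> funs p q"
  shows "pg_act p q id id f = f"
proof
  fix x show "pg_act p q id id f x = f x"
  proof (cases "x \<in> Xset p q \<times> Xset p q")
    case True then show ?thesis unfolding pg_act_def by auto
  next
    case False then show ?thesis using PiE_arb[of f, OF assms[unfolded funs_def] False] unfolding pg_act_def by simp
  qed
qed

lemma pg_elems_inv:
  assumes "(\<alpha>, \<beta>) \<in> pg_elems p q"
  shows "(inv_into UNIV \<alpha>, inv_into UNIV \<beta>) \<in> pg_elems p q"
proof -
  have \<alpha>: "\<alpha> permutes Xset p q" and \<beta>: "\<beta> permutes {1..q}" and "\<beta> 1 = 1"
    using assms unfolding pg_elems_def by auto
  then have "inv_into UNIV \<beta> 1 = 1" using permutes_inverses(2)[OF \<beta>, of 1] by simp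
  then show ?thesis using permutes_inv[OF \<alpha>] permutes_inv[OF \<beta>] unfolding pg_elems_def by simp
qed

lemma group_power_group: "group (power_group p q)"
proof (rule groupI)
  fix x y assume "x \<in> carrier (power_group p q)" "y \<in> carrier (power_group p q)"
  thus "x \<otimes>\<^bsub>power_group p q\<^esub> y \<in> carrier (power_group p q)"
    unfolding power_group_def pg_elems_def by (auto intro: permutes_compose)
next
  show "\<one>\<^bsub>power_group p q\<^esub> \<in> carrier (power_group p q)" unfolding power_group_def pg_elems_def by (simp add: permutes_id)
next
  fix x y z show "x \<otimes>\<^bsub>power_group p q\<^esub> y \<otimes>\<^bsub>power_group p q\<^esub> z = x \<otimes>\<^bsub>power_group p q\<^esub> (y \<otimes>\<^bsub>power_group p q\<^esub> z)"
    unfolding power_group_def by (simp add: comp_assoc)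
next
  fix x show "\<one>\<^bsub>power_group p q\<^esub> \<otimes>\<^bsub>power_group p q\<^esub> x = x" unfolding power_group_def by simp
next
  fix x assume x: "x \<in> carrier (power_group p q)"
  obtain \<alpha> \<beta> where xe: "x = (\<alpha>, \<beta>)" by (cases x)
  have m: "(\<alpha>, \<beta>) \<in> pg_elems p q" using x xe unfolding power_group_def by simp
  hence a: "\<alpha> permutes Xset p q" and b: "\<beta> permutes {1..q}" unfolding pg_elems_def by auto
  have "(inv_into UNIV \<alpha>, inv_into UNIV \<beta>) \<in> carrier (power_group p q)" using pg_elems_inv[OF m] unfolding power_group_def by simp
  moreover have "(inv_into UNIV \<alpha>, inv_into UNIV \<beta>) \<otimes>\<^bsub>power_group p q\<^esub> x = \<one>\<^bsub>power_group p q\<^esub>"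
    unfolding power_group_def xe using permutes_inv_o[OF a] permutes_inv_o[OF b] by simp
  ultimately show "\<exists>y\<in>carrier (power_group p q). y \<otimes>\<^bsub>power_group p q\<^esub> x = \<one>\<^bsub>power_group p q\<^esub>" by blast
qed

lemma pg_act_inverse:
  assumes "f \<in> funs p q" "\<alpha> permutes Xset p q" "\<beta> permutes {1..q}"
  shows "pg_act p q (inv_into UNIV \<alpha>) (inv_into UNIV \<beta>) (pg_act p q \<alpha> \<beta> f) = f"
    and "pg_act p q \<alpha> \<beta> (pg_act p q (inv_into UNIV \<alpha>) (inv_into UNIV \<beta>) f) = f"
  using pg_act_comp[OF assms(1) permutes_inv[OF assms(2)]] pg_act_comp[OF assms(1,2)]
    permutes_inv_o[OF assms(2)] permutes_inv_o[OF assms(3)] pg_act_id[OF assms(1)] by simp_all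

lemma pg_act_bij:
  assumes "(\<alpha>, \<beta>) \<in> pg_elems p q"
  shows "bij_betw (pg_act p q \<alpha> \<beta>) (funs p q) (funs p q)"
proof (rule bij_betwI[where g = "pg_act p q (inv_into UNIV \<alpha>) (inv_into UNIV \<beta>)"])
  have \<alpha>: "\<alpha> permutes Xset p q" and \<beta>: "\<beta> permutes {1..q}" using assms unfolding pg_elems_def by auto
  show "pg_act p q \<alpha> \<beta> \<in> funs p q \<rightarrow> funs p q" using pg_act_funs[OF _ assms] by auto
  show "pg_act p q (inv_into UNIV \<alpha>) (inv_into UNIV \<beta>) \<in> funs p q \<rightarrow> funs p q"
    using pg_act_funs[OF _ pg_elems_inv[OF assms]] by auto
  show "pg_act p q (inv_into UNIV \<alpha>) (inv_into UNIV \<beta>) (pg_act p q \<alpha> \<beta> f) = f"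
    and "pg_act p q \<alpha> \<beta> (pg_act p q (inv_into UNIV \<alpha>) (inv_into UNIV \<beta>) f) = f"
    if "f \<in> funs p q" for f
    using pg_act_inverse[OF that \<alpha> \<beta>] by simp_all
qed

lemma power_action_Bij:
  assumes "g \<in> pg_elems p q"
  shows "power_action p q g \<in> Bij (funs p q)"
proof -
  have "bij_betw (pg_act p q (fst g) (snd g)) (funs p q) (funs p q)"
    using pg_act_bij[of "fst g" "snd g"] assms by simp
  then have "bij_betw (power_action p q g) (funs p q) (funs p q)"
    unfolding power_action_def by (rule bij_betw_cong[THEN iffD1, rotated]) simp
  then show ?thesis unfolding Bij_def power_action_def by simp
qed

lemma group_action_power_action: "group_action (power_group p q) (funs p q) (power_action p q)"
  unfolding group_action_def group_hom_def group_hom_axioms_def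
proof (intro conjI group_power_group group_BijGroup homI)
  fix g assume "g \<in> carrier (power_group p q)"
  then show "power_action p q g \<in> carrier (BijGroup (funs p q))"
    using power_action_Bij unfolding power_group_def BijGroup_def by simp
next
  fix g h assume g: "g \<in> carrier (power_group p q)" and h: "h \<in> carrier (power_group p q)"
  have "fst g permutes Xset p q" using g unfolding power_group_def pg_elems_def by auto
  moreover have "pg_act p q (fst h) (snd h) f \<in> funs p q" if "f \<in> funs p q" for f
    using pg_act_funs[OF that, of "fst h" "snd h"] h unfolding power_group_def by simp
  ultimately have "compose (funs p q) (power_action p q g) (power_action p q h)
      = power_action p q (g \<otimes>\<^bsub>power_group p q\<^esub> h)"
    using pg_act_comp unfolding compose_def power_action_def power_group_def by (auto simp: fun_eq_iff)
  then show "power_action p q (g \<otimes>\<^bsub>power_group p q\<^esub> h)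
      = power_action p q g \<otimes>\<^bsub>BijGroup (funs p q)\<^esub> power_action p q h"
    using power_action_Bij g h unfolding BijGroup_def power_group_def by simp
qed

lemma permutes_fixing_iff: "\<beta> permutes S \<and> \<beta> a = a \<longleftrightarrow> \<beta> permutes (S - {a})"
  using permutes_superset[of \<beta> S "S - {a}"] permutes_subset[of \<beta> "S - {a}" S] permutes_not_in[of \<beta> "S - {a}" a]
  by auto

lemma pg_elems_eq:
  assumes "1 \<le> q"
  shows "pg_elems p q = {\<alpha>. \<alpha> permutes Xset p q} \<times> {\<beta>. \<beta> permutes {2..q}}"
proof -
  have "{1..q} - {1} = {2..q}" by auto
  then show ?thesis unfolding pg_elems_def using permutes_fixing_iff[of _ "{1..q}" 1] by auto
qed

lemma finite_pg_elems: "finite (pg_elems p q)"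
proof (rule finite_subset)
  show "pg_elems p q \<subseteq> {\<alpha>. \<alpha> permutes Xset p q} \<times> {\<beta>. \<beta> permutes {1..q}}"
    unfolding pg_elems_def by auto
  show "finite ({\<alpha>. \<alpha> permutes Xset p q} \<times> {\<beta>. \<beta> permutes {1..q}})"
    by (intro finite_cartesian_product finite_permutations) (auto simp: Xset_def)
qed

lemma finite_funs: "finite (funs p q)"
  unfolding funs_def by (intro finite_PiE) (auto simp: Xset_def)

lemma num_orbits_burnside:
  "card (pg_orbit p q ` funs p q) * card (pg_elems p q) =
   (\<Sum>g\<in>pg_elems p q. card {f \<in> funs p q. pg_act p q (fst g) (snd g) f = f})"
proof -
  interpret ga: group_action "power_group p q" "funs p q" "power_action p q" by (rule group_action_power_action)
  have fc: "finite (carrier (power_group p q))" unfolding power_group_def using finite_pg_elems by simp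
  have B: "card (orbits (power_group p q) (funs p q) (power_action p q)) * order (power_group p q) =
        (\<Sum>g \<in> carrier (power_group p q). card (invariants (funs p q) (power_action p q) g))"
    by (rule ga.burnside[OF fc finite_funs])
  have O: "orbits (power_group p q) (funs p q) (power_action p q) = pg_orbit p q ` funs p q"
  proof -
    have "Group_Action.orbit (power_group p q) (power_action p q) f = pg_orbit p q f" if "f \<in> funs p q" for f
      unfolding Group_Action.orbit_def pg_orbit_def power_action_def power_group_def using that by force
    thus ?thesis unfolding orbits_def by auto
  qed
  have I: "invariants (funs p q) (power_action p q) g = {f \<in> funs p q. pg_act p q (fst g) (snd g) f = f}" for g
    unfolding invariants_def power_action_def by auto
  show ?thesis using B unfolding O I order_def by (simp add: power_group_def)
qed

lemma card_Xset: "card (Xset p q) = p - q"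
proof -
  have "Xset p q = {Suc q..p}" unfolding Xset_def by auto
  then show ?thesis by simp
qed

lemma card_fixed_funs_power_group:
  assumes "1 \<le> q" "\<alpha> permutes Xset p q" "\<beta> permutes {2..q}"
  shows "real (card {f \<in> funs p q. pg_act p q \<alpha> \<beta> f = f})
       = fixed_count_by_type (p - q) (cycle_type (Xset p q) \<alpha>) (cycle_type {2..q} \<beta>)"
proof -
  have "insert 1 {2..q} = {1..q}" using assms(1) by auto
  then have "{f \<in> funs p q. pg_act p q \<alpha> \<beta> f = f} =
      {f \<in> (Xset p q \<times> Xset p q) \<rightarrow>\<^sub>E insert 1 {2..q}.
         restrict (\<lambda>(x\<^sub>1, x\<^sub>2). \<beta> (f (\<alpha> x\<^sub>1, \<alpha> x\<^sub>2))) (Xset p q \<times> Xset p q) = f}"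
    unfolding funs_def pg_act_def by simp
  then show ?thesis
    using card_fixed_funs_pair[OF _ assms(2) _ assms(3), of 1] card_Xset by (simp add: Xset_def)
qed

lemma num_orbits_sum_permutations:
  assumes "1 \<le> q"
  shows "real (num_orbits p q) * (fact (p - q) * fact (q - 1)) =
    (\<Sum>\<alpha> | \<alpha> permutes Xset p q. \<Sum>\<beta> | \<beta> permutes {2..q}.
       fixed_count_by_type (p - q) (cycle_type (Xset p q) \<alpha>) (cycle_type {2..q} \<beta>))"
proof -
  have "card (pg_elems p q) = fact (p - q) * fact (q - 1)"
    unfolding pg_elems_eq[OF assms] card_cartesian_product
    using card_permutations[OF card_Xset] card_permutations[of "{2..q}" "q - 1"] by (simp add: Xset_def)
  then have "real (num_orbits p q) * (fact (p - q) * fact (q - 1)) = real (num_orbits p q * card (pg_elems p q))"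
    by simp
  also have "\<dots> = (\<Sum>g\<in>pg_elems p q. real (card {f \<in> funs p q. pg_act p q (fst g) (snd g) f = f}))"
    using num_orbits_burnside[of p q] unfolding num_orbits_def by (simp flip: of_nat_sum)
  also have "\<dots> = (\<Sum>(\<alpha>, \<beta>) \<in> {\<alpha>. \<alpha> permutes Xset p q} \<times> {\<beta>. \<beta> permutes {2..q}}.
      fixed_count_by_type (p - q) (cycle_type (Xset p q) \<alpha>) (cycle_type {2..q} \<beta>))"
    unfolding pg_elems_eq[OF assms] by (rule sum.cong[OF refl]) (auto simp: card_fixed_funs_power_group[OF assms])
  finally show ?thesis by (simp add: sum.cartesian_product)
qed

theorem mainTheorem10:
  fixes p q :: nat
  assumes "1 \<le> q" and "q < p"
  shows "real (num_orbits p q) = N_formula p q"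
proof -
  let ?X = "Xset p q" and ?Q = "{2..q} :: nat set" and ?n = "p - q" and ?m = "q - 1"
  have X: "finite ?X" "card ?X = ?n" by (simp add: Xset_def) (rule card_Xset)
  have Q: "finite ?Q" "card ?Q = ?m" by simp_all
  have "real (num_orbits p q) * (fact ?n * fact ?m) =
      (\<Sum>\<alpha> | \<alpha> permutes ?X. \<Sum>j\<in>partitions_mult ?m.
         fact ?m / centralizer_order ?m j * fixed_count_by_type ?n (cycle_type ?X \<alpha>) j)"
    unfolding num_orbits_sum_permutations[OF assms(1)]
    using sum_permutations_by_cycle_type[OF Q(1), of "\<lambda>j. fixed_count_by_type ?n (cycle_type ?X _) j"] Q(2)
    by simp
  also have "\<dots> = (\<Sum>j\<in>partitions_mult ?m. fact ?m / centralizer_order ?m j *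
      (\<Sum>\<alpha> | \<alpha> permutes ?X. fixed_count_by_type ?n (cycle_type ?X \<alpha>) j))"
    by (subst sum.swap) (simp add: sum_distrib_left)
  also have "\<dots> = (\<Sum>j\<in>partitions_mult ?m. fact ?m / centralizer_order ?m j *
      (\<Sum>k\<in>partitions_mult ?n. fact ?n / centralizer_order ?n k * fixed_count_by_type ?n k j))"
    by (rule sum.cong[OF refl])
      (use sum_permutations_by_cycle_type[OF X(1), of "\<lambda>k. fixed_count_by_type ?n k _"] X(2) in simp)
  also have "\<dots> = (fact ?n * fact ?m) * N_formula p q"
    unfolding N_formula_def fixed_count_by_type_def centralizer_order_def
    by (simp add: sum_distrib_left sum_divide_distrib field_simps)
  finally show ?thesis by simp
qed

end
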